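(* Let $(M,\circ,\mathrm{OR})$ be a free $\mathbb{D}$-module of rank 3 with scalar product and orientation. (1) Two elements $z_1,z_2\in M\setminus\epsilon M$ are $\mathbb{R}$-linearly dependent if and only if they have the same axis (as unoriented lines) and the same pitch. (2) If $z_1,z_2,z_3\in M\setminus\epsilon M$ are $\mathbb{R}$-linearly dependent, then their axes intersect orthogonally a common line of $E$; moreover, if the axes are parallel, they are coplanar.
   Context: $\mathbb{D}=\{a+\epsilon b: a,b\in\mathbb{R}\}$, $\epsilon^2=0$. Scalar product: symmetric $\mathbb{D}$-bilinear $\circ:M\times M\to\mathbb{D}$ with $\mathfrak{Re}(x\circ x)\ge0$, equality iff $x\in\epsilon M$; orientation: one of the two classes of ordered bases under $\{b'_j=A_{jk}b_k\}\sim\{b_k\}$ iff $\det\mathfrak{Re}(A)>0$. $V=M/\epsilon M$, $\pi$ the quotient map. $E$ is the set of real 3-dimensional subspaces $P\subset M$ with $\mathfrak{Du}(x\circ y)=0$ for $x,y\in P$ and $P\cap\epsilon M=\{0\}$, a Euclidean affine space over $V$ (with $B-A:=d^ke_k$ where $e^B_i=e^A_i+\epsilon\,\epsilon_{ijk}d^ke^A_j$, $\{e_i\}$ positive orthonormal in $V$, $e^P_i\in P$ its lift). Each $z\in M\setminus\epsilon M$ is uniquely $z=(a+\epsilon b)u$ with $a>0$, $b\in\mathbb{R}$, $u\circ u=1$; its pitch is $b/a$ and its axis is the line $\{P\in E: u\in P\}$, with direction $\pi(u)$. *)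

theory Defs
  imports "HOL-Analysis.Analysis"
begin

datatype dual = Dual (re: real) (du: real)

instantiation dual :: comm_ring_1
begin
definition zero_dual_def: "0 = Dual 0 0"
definition one_dual_def: "1 = Dual 1 0"
definition plus_dual_def: "x + y = Dual (re x + re y) (du x + du y)"
definition minus_dual_def: "x - y = Dual (re x - re y) (du x - du y)"
definition uminus_dual_def: "- x = Dual (- re x) (- du x)"
definition times_dual_def: "x * y = Dual (re x * re y) (re x * du y + du x * re y)"
instance
  by standard (auto simp: zero_dual_def one_dual_def plus_dual_def minus_dual_def
      uminus_dual_def times_dual_def algebra_simps intro: dual.expand)
end

section \<open>D-modules: a real vector space with a square-zero linear map e (multiplication by epsilon)\<close>

definition dscale :: "('m::real_vector \<Rightarrow> 'm) \<Rightarrow> dual \<Rightarrow> 'm \<Rightarrow> 'm" where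
  "dscale e c x = re c *\<^sub>R x + du c *\<^sub>R e x"

definition dbasis :: "('m::real_vector \<Rightarrow> 'm) \<Rightarrow> 'm^3 \<Rightarrow> bool" where
  "dbasis e b \<longleftrightarrow> (\<forall>x. \<exists>!c::dual^3. x = (\<Sum>k\<in>UNIV. dscale e (c$k) (b$k)))"

definition same_or :: "('m::real_vector \<Rightarrow> 'm) \<Rightarrow> 'm^3 \<Rightarrow> 'm^3 \<Rightarrow> bool" where
  "same_or e b b' \<longleftrightarrow> (\<exists>A::dual^3^3.
      (\<forall>j. b'$j = (\<Sum>k\<in>UNIV. dscale e (A$j$k) (b$k))) \<and> det (\<chi> j k. re (A$j$k)) > 0)"

definition orientation :: "('m::real_vector \<Rightarrow> 'm) \<Rightarrow> ('m^3) set \<Rightarrow> bool" where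
  "orientation e OR \<longleftrightarrow> (\<exists>b. dbasis e b \<and> OR = {b'. dbasis e b' \<and> same_or e b b'})"

definition scalar_product :: "('m::real_vector \<Rightarrow> 'm) \<Rightarrow> ('m \<Rightarrow> 'm \<Rightarrow> dual) \<Rightarrow> bool" where
  "scalar_product e sp \<longleftrightarrow>
     (\<forall>x y. sp x y = sp y x) \<and>
     (\<forall>x y w. sp (x + y) w = sp x w + sp y w) \<and>
     (\<forall>c x y. sp (dscale e c x) y = c * sp x y) \<and>
     (\<forall>x. re (sp x x) \<ge> 0 \<and> (re (sp x x) = 0 \<longleftrightarrow> x \<in> range e))"

definition dmodule3 :: "('m::real_vector \<Rightarrow> 'm) \<Rightarrow> ('m \<Rightarrow> 'm \<Rightarrow> dual) \<Rightarrow> ('m^3) set \<Rightarrow> bool" where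
  "dmodule3 e sp OR \<longleftrightarrow> linear e \<and> (\<forall>x. e (e x) = 0) \<and> (\<exists>b. dbasis e b)
     \<and> scalar_product e sp \<and> orientation e OR"

definition Epts :: "('m::real_vector \<Rightarrow> 'm) \<Rightarrow> ('m \<Rightarrow> 'm \<Rightarrow> dual) \<Rightarrow> 'm set set" where
  "Epts e sp = {P. subspace P \<and> dim P = 3 \<and> (\<forall>x\<in>P. \<forall>y\<in>P. du (sp x y) = 0) \<and> P \<inter> range e = {0}}"

definition levi :: "3 \<Rightarrow> 3 \<Rightarrow> 3 \<Rightarrow> real" where
  "levi i j k = (if (i,j,k) \<in> {(1,2,3),(2,3,1),(3,1,2)} then 1
                 else if (i,j,k) \<in> {(1,3,2),(3,2,1),(2,1,3)} then -1 else 0)"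

text \<open>Vectors of V = M/eM are represented by elements of M (modulo range e).
  Ediff e sp OR A B x means B - A = pi(x): for a positive orthonormal basis of V
  lifted to u1,u2,u3 in A, with pi(x) = d^k pi(u_k), the lift of the basis to B is
  u_i + e(levi i j k d^k u_j).\<close>
definition Ediff :: "('m::real_vector \<Rightarrow> 'm) \<Rightarrow> ('m \<Rightarrow> 'm \<Rightarrow> dual) \<Rightarrow> ('m^3) set
                     \<Rightarrow> 'm set \<Rightarrow> 'm set \<Rightarrow> 'm \<Rightarrow> bool" where
  "Ediff e sp OR A B x \<longleftrightarrow> (\<exists>(u::'m^3) (d::real^3).
      (\<forall>i. u$i \<in> A) \<and> (\<forall>i j. re (sp (u$i) (u$j)) = (if i = j then 1 else 0)) \<and> u \<in> OR \<and>
      x - (\<Sum>k\<in>UNIV. d$k *\<^sub>R u$k) \<in> range e \<and>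
      (\<forall>i. u$i + e (\<Sum>j\<in>UNIV. \<Sum>k\<in>UNIV. (levi i j k * d$k) *\<^sub>R u$j) \<in> B))"

definition Eline :: "('m::real_vector \<Rightarrow> 'm) \<Rightarrow> ('m \<Rightarrow> 'm \<Rightarrow> dual) \<Rightarrow> ('m^3) set
                     \<Rightarrow> 'm set \<Rightarrow> 'm \<Rightarrow> 'm set set" where
  "Eline e sp OR A v = {B \<in> Epts e sp. \<exists>t x. Ediff e sp OR A B x \<and> x - t *\<^sub>R v \<in> range e}"

definition Eplane :: "('m::real_vector \<Rightarrow> 'm) \<Rightarrow> ('m \<Rightarrow> 'm \<Rightarrow> dual) \<Rightarrow> ('m^3) set
                     \<Rightarrow> 'm set \<Rightarrow> 'm \<Rightarrow> 'm \<Rightarrow> 'm set set" where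
  "Eplane e sp OR A v w = {B \<in> Epts e sp. \<exists>s t x. Ediff e sp OR A B x \<and> x - s *\<^sub>R v - t *\<^sub>R w \<in> range e}"

definition is_Eplane :: "('m::real_vector \<Rightarrow> 'm) \<Rightarrow> ('m \<Rightarrow> 'm \<Rightarrow> dual) \<Rightarrow> ('m^3) set
                     \<Rightarrow> 'm set set \<Rightarrow> bool" where
  "is_Eplane e sp OR S \<longleftrightarrow> (\<exists>A\<in>Epts e sp. \<exists>v w.
      (\<forall>s t. s *\<^sub>R v + t *\<^sub>R w \<in> range e \<longrightarrow> s = 0 \<and> t = 0) \<and> S = Eplane e sp OR A v w)"

definition dec :: "('m::real_vector \<Rightarrow> 'm) \<Rightarrow> ('m \<Rightarrow> 'm \<Rightarrow> dual) \<Rightarrow> 'm \<Rightarrow> real \<times> real \<times> 'm" where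
  "dec e sp z = (THE (a, b, u). a > 0 \<and> z = dscale e (Dual a b) u \<and> sp u u = 1)"

definition pitch :: "('m::real_vector \<Rightarrow> 'm) \<Rightarrow> ('m \<Rightarrow> 'm \<Rightarrow> dual) \<Rightarrow> 'm \<Rightarrow> real" where
  "pitch e sp z = (case dec e sp z of (a, b, u) \<Rightarrow> b / a)"

definition unitpart :: "('m::real_vector \<Rightarrow> 'm) \<Rightarrow> ('m \<Rightarrow> 'm \<Rightarrow> dual) \<Rightarrow> 'm \<Rightarrow> 'm" where
  "unitpart e sp z = snd (snd (dec e sp z))"

text \<open>The axis: the line {P in E. u in P}; its direction is pi(u).\<close>
definition screw_axis :: "('m::real_vector \<Rightarrow> 'm) \<Rightarrow> ('m \<Rightarrow> 'm \<Rightarrow> dual) \<Rightarrow> 'm \<Rightarrow> 'm set set" where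
  "screw_axis e sp z = {P \<in> Epts e sp. unitpart e sp z \<in> P}"

end

theory Submission
  imports Defs
begin

text \<open>Fix a positively oriented orthonormal \<open>\<bbbD>\<close>-basis \<open>f\<close> of \<open>M\<close> (Gram-Schmidt, then flip the
  last vector if necessary). Writing \<open>z = \<Sum>k. (w\<^sub>k + \<epsilon> v\<^sub>k) f\<^sub>k\<close> identifies \<open>M\<close> with pairs
  \<open>(w, v)\<close> of vectors in \<open>\<real>\<^sup>3\<close>, i.e. with screws in Pluecker coordinates, and \<open>\<epsilon>M\<close> with
  the pairs \<open>(0, v)\<close>. The points of \<open>E\<close> are then exactly the subspaces
  \<open>{\<Sum>k. (a\<^sub>k + \<epsilon> (p \<times> a)\<^sub>k) f\<^sub>k | a \<in> \<real>\<^sup>3}\<close>, \<open>p \<in> \<real>\<^sup>3\<close>, the translation between the points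
  \<open>p\<close> and \<open>q\<close> being \<open>q - p\<close>; an element \<open>(w, v)\<close> with \<open>w \<noteq> 0\<close> has pitch \<open>h = w \<bullet> v / w \<bullet> w\<close>
  and its axis is the line \<open>{p. p \<times> w = v - h w}\<close> through \<open>w \<times> v / w \<bullet> w\<close> with direction \<open>w\<close>.

  Both claims thereby become statements about screws in \<open>\<real>\<^sup>3\<close>. (1) Axis and pitch determine
  \<open>v\<close> from \<open>w\<close>, and \<open>w\<close> up to a scalar. (2) A line \<open>q + \<real>d\<close> orthogonal to \<open>w\<close> and meeting
  the axis of \<open>(w, v)\<close> is described by the conditions \<open>d \<bullet> w = 0\<close> and \<open>(v - q \<times> w) \<bullet> d = 0\<close>,
  which are linear in \<open>(w, v)\<close>. Such \<open>q, d\<close> exist for any two screws (\<open>d = w\<^sub>1 \<times> w\<^sub>2\<close> if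
  the directions are not parallel), so they also serve for a third screw dependent on the
  first two. If all directions are parallel to \<open>n\<close>, every axis lies in the plane through
  \<open>q\<close> spanned by \<open>d\<close> and \<open>n\<close>.\<close>

unbundle cross3_syntax

lemma re_add [simp]: "re (x + y) = re x + re y" by (simp add: plus_dual_def)
lemma du_add [simp]: "du (x + y) = du x + du y" by (simp add: plus_dual_def)
lemma re_diff [simp]: "re (x - y) = re x - re y" by (simp add: minus_dual_def)
lemma du_diff [simp]: "du (x - y) = du x - du y" by (simp add: minus_dual_def)
lemma re_uminus [simp]: "re (- x) = - re x" by (simp add: uminus_dual_def)
lemma du_uminus [simp]: "du (- x) = - du x" by (simp add: uminus_dual_def)
lemma re_mult [simp]: "re (x * y) = re x * re y" by (simp add: times_dual_def)
lemma du_mult [simp]: "du (x * y) = re x * du y + du x * re y" by (simp add: times_dual_def)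
lemma re_zero [simp]: "re 0 = 0" by (simp add: zero_dual_def)
lemma du_zero [simp]: "du 0 = 0" by (simp add: zero_dual_def)
lemma re_one [simp]: "re 1 = 1" by (simp add: one_dual_def)
lemma du_one [simp]: "du 1 = 0" by (simp add: one_dual_def)
lemma re_sum [simp]: "re (sum g S) = (\<Sum>i\<in>S. re (g i))"
  by (induction S rule: infinite_finite_induct) auto
lemma du_sum [simp]: "du (sum g S) = (\<Sum>i\<in>S. du (g i))"
  by (induction S rule: infinite_finite_induct) auto

lemma dual_eq_iff: "x = y \<longleftrightarrow> re x = re y \<and> du x = du y"
  by (auto intro: dual.expand)

definition dual_inverse :: "dual \<Rightarrow> dual" where
  "dual_inverse c = Dual (1 / re c) (- du c / (re c)\<^sup>2)"

lemma dual_inverse_mult: "re c \<noteq> 0 \<Longrightarrow> dual_inverse c * c = 1"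
  by (simp add: dual_inverse_def dual_eq_iff field_simps power2_eq_square)

definition dual_inverse_sqrt :: "dual \<Rightarrow> dual" where
  "dual_inverse_sqrt c = Dual (1 / sqrt (re c)) (- du c / (2 * re c * sqrt (re c)))"

lemma dual_inverse_sqrt_square: "re c > 0 \<Longrightarrow> dual_inverse_sqrt c * (dual_inverse_sqrt c * c) = 1"
  by (simp add: dual_inverse_sqrt_def dual_eq_iff field_simps)

lemma re_dual_inverse_sqrt_pos: "re c > 0 \<Longrightarrow> re (dual_inverse_sqrt c) > 0"
  by (simp add: dual_inverse_sqrt_def)

locale dual_module =
  fixes e :: "'m::real_vector \<Rightarrow> 'm" and sp :: "'m \<Rightarrow> 'm \<Rightarrow> dual" and OR :: "('m^3) set"
  assumes dmodule3: "dmodule3 e sp OR"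
begin

lemma linear_e: "linear e"
  using dmodule3 by (simp add: dmodule3_def)

lemma e_e [simp]: "e (e x) = 0"
  using dmodule3 by (simp add: dmodule3_def)

lemma e_add [simp]: "e (x + y) = e x + e y" using linear_add[OF linear_e] .
lemma e_scaleR [simp]: "e (c *\<^sub>R x) = c *\<^sub>R e x" using linear_scale[OF linear_e] .
lemma e_zero [simp]: "e 0 = 0" using linear_0[OF linear_e] .
lemma e_diff [simp]: "e (x - y) = e x - e y" using linear_diff[OF linear_e] .
lemma e_minus [simp]: "e (- x) = - e x" using linear_neg[OF linear_e] .
lemma e_sum [simp]: "e (sum g S) = (\<Sum>i\<in>S. e (g i))" using linear_sum[OF linear_e] .

lemma zero_in_range_e [simp]: "0 \<in> range e"
  by (metis e_zero rangeI)

lemma subspace_range_e: "subspace (range e)"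
  using linear_subspace_image[OF linear_e subspace_UNIV] by simp

lemma scalar_product: "scalar_product e sp"
  using dmodule3 by (simp add: dmodule3_def)

lemma sp_sym: "sp x y = sp y x"
  using scalar_product unfolding scalar_product_def by blast

lemma sp_add_left [simp]: "sp (x + y) w = sp x w + sp y w"
  using scalar_product unfolding scalar_product_def by blast

lemma sp_dscale_left [simp]: "sp (dscale e c x) y = c * sp x y"
  using scalar_product unfolding scalar_product_def by blast

lemma re_sp_self_eq_0_iff: "re (sp x x) = 0 \<longleftrightarrow> x \<in> range e"
  using scalar_product by (simp add: scalar_product_def)

lemma re_sp_self_pos: "x \<notin> range e \<Longrightarrow> re (sp x x) > 0"
  using scalar_product re_sp_self_eq_0_iff[of x] by (force simp: scalar_product_def)

lemma sp_add_right [simp]: "sp w (x + y) = sp w x + sp w y"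
  by (metis sp_sym sp_add_left)

lemma sp_dscale_right [simp]: "sp y (dscale e c x) = c * sp y x"
  by (metis sp_sym sp_dscale_left)

lemma dscale_real: "dscale e (Dual c 0) x = c *\<^sub>R x"
  by (simp add: dscale_def)

lemma dscale_eps: "dscale e (Dual 0 c) x = c *\<^sub>R e x"
  by (simp add: dscale_def)

lemma sp_scaleR_left [simp]: "sp (c *\<^sub>R x) y = Dual c 0 * sp x y"
  by (metis dscale_real sp_dscale_left)

lemma sp_scaleR_right [simp]: "sp y (c *\<^sub>R x) = Dual c 0 * sp y x"
  by (metis sp_sym sp_scaleR_left)

lemma sp_e_left [simp]: "sp (e x) y = Dual 0 1 * sp x y"
  by (metis dscale_eps scaleR_one sp_dscale_left)

lemma sp_zero_left [simp]: "sp 0 y = 0"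
  using sp_scaleR_left[of 0 0 y] by (simp add: dual_eq_iff)

lemma sp_zero_right [simp]: "sp y 0 = 0"
  by (metis sp_sym sp_zero_left)

lemma sp_minus_left [simp]: "sp (- x) y = - sp x y"
  by (metis add_eq_0_iff2 sp_add_left sp_zero_left add.right_inverse)

lemma sp_minus_right [simp]: "sp y (- x) = - sp y x"
  by (metis sp_sym sp_minus_left)

lemma sp_diff_left [simp]: "sp (x - z) y = sp x y - sp z y"
  by (metis diff_conv_add_uminus sp_add_left sp_minus_left)

lemma sp_sum_left: "sp (sum g S) y = (\<Sum>i\<in>S. sp (g i) y)"
  by (induction S rule: infinite_finite_induct) auto

lemma sp_sum_right: "sp y (sum g S) = (\<Sum>i\<in>S. sp y (g i))"
  by (induction S rule: infinite_finite_induct) auto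

lemma dscale_one [simp]: "dscale e 1 x = x"
  by (simp add: dscale_def)

lemma dscale_zero [simp]: "dscale e 0 x = 0"
  by (simp add: dscale_def)

lemma dscale_add_left: "dscale e (c + d) x = dscale e c x + dscale e d x"
  by (simp add: dscale_def algebra_simps)

lemma dscale_diff_left: "dscale e (c - d) x = dscale e c x - dscale e d x"
  by (simp add: dscale_def algebra_simps)

lemma dscale_minus_left: "dscale e (- c) x = - dscale e c x"
  by (simp add: dscale_def)

lemma dscale_minus_right: "dscale e c (- x) = - dscale e c x"
  by (simp add: dscale_def)

lemma dscale_diff_right: "dscale e c (x - y) = dscale e c x - dscale e c y"
  by (simp add: dscale_def algebra_simps)

lemma dscale_dscale: "dscale e c (dscale e d x) = dscale e (c * d) x"
  by (simp add: dscale_def algebra_simps)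

lemma dscale_sum_right: "dscale e c (sum g S) = (\<Sum>i\<in>S. dscale e c (g i))"
  by (simp add: dscale_def scaleR_sum_right sum.distrib)

lemma e_dscale: "e (dscale e c x) = re c *\<^sub>R e x"
  by (simp add: dscale_def)

lemma dscale_dual_inverse: "re c \<noteq> 0 \<Longrightarrow> dscale e (dual_inverse c) (dscale e c x) = x"
  by (simp add: dscale_dscale dual_inverse_mult)

lemma dscale_sum_minus_re_sum:
  "(\<Sum>k\<in>UNIV. dscale e (c$k) (b$k)) - (\<Sum>k\<in>UNIV. re (c$k) *\<^sub>R b$k) \<in> range e"
proof -
  have "(\<Sum>k\<in>UNIV. dscale e (c$k) (b$k)) - (\<Sum>k\<in>UNIV. re (c$k) *\<^sub>R b$k)
      = e (\<Sum>k\<in>UNIV. du (c$k) *\<^sub>R b$k)"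
    by (simp add: dscale_def sum.distrib)
  then show ?thesis by (metis rangeI)
qed

lemma unit_normalization:
  assumes "x \<notin> range e"
  obtains n where "re n \<noteq> 0" "sp (dscale e n x) (dscale e n x) = 1"
proof
  show "re (dual_inverse_sqrt (sp x x)) \<noteq> 0"
    using re_dual_inverse_sqrt_pos[OF re_sp_self_pos[OF assms]] by simp
  show "sp (dscale e (dual_inverse_sqrt (sp x x)) x) (dscale e (dual_inverse_sqrt (sp x x)) x) = 1"
    using dual_inverse_sqrt_square[OF re_sp_self_pos[OF assms]] by simp
qed

subsection \<open>Orthonormal frames\<close>

definition dspan :: "'m^3 \<Rightarrow> 'm set" where
  "dspan b = {x. \<exists>c::dual^3. x = (\<Sum>k\<in>UNIV. dscale e (c$k) (b$k))}"

lemma dspan_basis: "b$j \<in> dspan b"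
proof -
  have "dscale e ((\<chi> k. if k = j then 1 else 0)$k) (b$k) = (if k = j then b$k else 0)" for k
    by (cases "k = j") simp_all
  then have "(\<Sum>k\<in>UNIV. dscale e ((\<chi> k. if k = j then 1 else 0)$k) (b$k)) = b$j"
    by simp
  then show ?thesis
    unfolding dspan_def mem_Collect_eq by (intro exI[of _ "\<chi> k. if k = j then 1 else 0"]) simp
qed

lemma dspan_add: "x \<in> dspan b \<Longrightarrow> y \<in> dspan b \<Longrightarrow> x + y \<in> dspan b"
proof -
  assume "x \<in> dspan b" "y \<in> dspan b"
  then obtain c d where "x = (\<Sum>k\<in>UNIV. dscale e (c$k) (b$k))" "y = (\<Sum>k\<in>UNIV. dscale e (d$k) (b$k))"
    unfolding dspan_def by blast
  then have "x + y = (\<Sum>k\<in>UNIV. dscale e ((c + d)$k) (b$k))"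
    by (simp add: dscale_add_left sum.distrib)
  then show ?thesis unfolding dspan_def by blast
qed

lemma dspan_dscale: "x \<in> dspan b \<Longrightarrow> dscale e a x \<in> dspan b"
proof -
  assume "x \<in> dspan b"
  then obtain c where "x = (\<Sum>k\<in>UNIV. dscale e (c$k) (b$k))" unfolding dspan_def by blast
  then have "dscale e a x = (\<Sum>k\<in>UNIV. dscale e ((\<chi> k. a * c$k)$k) (b$k))"
    by (simp add: dscale_sum_right dscale_dscale)
  then show ?thesis unfolding dspan_def by blast
qed

lemma dbasis_obtain_coeffs:
  assumes "dbasis e b"
  obtains c where "x = (\<Sum>k\<in>UNIV. dscale e (c$k) (b$k))"
  using assms unfolding dbasis_def by metis

lemma dbasis_coeffs_unique:
  assumes "dbasis e b" and "(\<Sum>k\<in>UNIV. dscale e (c$k) (b$k)) = (\<Sum>k\<in>UNIV. dscale e (c'$k) (b$k))"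
  shows "c = c'"
  using assms unfolding dbasis_def by metis

lemma dbasis_obtain_matrix:
  assumes "dbasis e b"
  obtains A :: "dual^3^3" where "\<forall>j. f$j = (\<Sum>k\<in>UNIV. dscale e (A$j$k) (b$k))"
proof -
  have "\<forall>j. \<exists>c. f$j = (\<Sum>k\<in>UNIV. dscale e (c$k) (b$k))"
    using dbasis_obtain_coeffs[OF assms] by blast
  then obtain g where "\<forall>j. f$j = (\<Sum>k\<in>UNIV. dscale e ((g j)$k) (b$k))"
    by (rule choice[THEN exE])
  then show ?thesis using that[of "\<chi> j. g j"] by simp
qed

lemma dbasis_real_independent:
  assumes b: "dbasis e b" and l: "(\<Sum>k\<in>UNIV. l$k *\<^sub>R b$k) \<in> range e"
  shows "l = 0"
proof -
  obtain w where w: "(\<Sum>k\<in>UNIV. l$k *\<^sub>R b$k) = e w" using l by auto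
  obtain c where c: "w = (\<Sum>k\<in>UNIV. dscale e (c$k) (b$k))" using dbasis_obtain_coeffs[OF b] by blast
  have "e w = (\<Sum>k\<in>UNIV. dscale e ((\<chi> k. Dual 0 (re (c$k)))$k) (b$k))"
    by (simp add: c e_dscale dscale_eps)
  moreover have "(\<Sum>k\<in>UNIV. l$k *\<^sub>R b$k) = (\<Sum>k\<in>UNIV. dscale e ((\<chi> k. Dual (l$k) 0)$k) (b$k))"
    by (simp add: dscale_real)
  ultimately have "(\<chi> k. Dual (l$k) 0) = (\<chi> k. Dual 0 (re (c$k)))"
    using dbasis_coeffs_unique[OF b] w by metis
  then show ?thesis by (simp add: vec_eq_iff)
qed

lemma dbasis_combination_not_in_range:
  assumes b: "dbasis e b" and "re (c$j) \<noteq> 0"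
  shows "(\<Sum>k\<in>UNIV. dscale e (c$k) (b$k)) \<notin> range e"
proof
  assume "(\<Sum>k\<in>UNIV. dscale e (c$k) (b$k)) \<in> range e"
  then have "(\<Sum>k\<in>UNIV. dscale e (c$k) (b$k))
      - ((\<Sum>k\<in>UNIV. dscale e (c$k) (b$k)) - (\<Sum>k\<in>UNIV. re (c$k) *\<^sub>R b$k)) \<in> range e"
    using dscale_sum_minus_re_sum[of c b] subspace_diff[OF subspace_range_e] by blast
  then have "(\<Sum>k\<in>UNIV. (\<chi> k. re (c$k))$k *\<^sub>R b$k) \<in> range e" by simp
  then have "(\<chi> k. re (c$k)) = 0" by (rule dbasis_real_independent[OF b])
  then show False using assms(2) by (simp add: vec_eq_iff)
qed

definition orthonormal :: "'m^3 \<Rightarrow> bool" where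
  "orthonormal f \<longleftrightarrow> (\<forall>i j. sp (f$i) (f$j) = (if i = j then 1 else 0))"

lemma orthonormal_coeff:
  assumes "orthonormal f"
  shows "sp (\<Sum>k\<in>UNIV. dscale e (c$k) (f$k)) (f$j) = c$j"
proof -
  have "sp (\<Sum>k\<in>UNIV. dscale e (c$k) (f$k)) (f$j) = (\<Sum>k\<in>UNIV. c$k * sp (f$k) (f$j))"
    by (simp add: sp_sum_left)
  also have "\<dots> = (\<Sum>k\<in>UNIV. if k = j then c$k else 0)"
    by (rule sum.cong) (use assms in \<open>auto simp: orthonormal_def\<close>)
  also have "\<dots> = c$j" by simp
  finally show ?thesis .
qed

lemma orthonormal_dbasis:
  assumes f: "orthonormal f" and span: "\<And>x. x \<in> dspan f"
  shows "dbasis e f"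
  unfolding dbasis_def
proof
  fix x
  obtain c where c: "x = (\<Sum>k\<in>UNIV. dscale e (c$k) (f$k))"
    using span[of x] unfolding dspan_def by blast
  show "\<exists>!c. x = (\<Sum>k\<in>UNIV. dscale e (c$k) (f$k))"
  proof (rule ex1I[of _ c])
    fix c' assume "x = (\<Sum>k\<in>UNIV. dscale e (c'$k) (f$k))"
    then show "c' = c" using orthonormal_coeff[OF f] c by (metis vec_eq_iff)
  qed (fact c)
qed

lemma dbasis_triangular_not_in_range:
  assumes b: "dbasis e b"
  shows "b$1 \<notin> range e" "b$2 - dscale e c (b$1) \<notin> range e"
    "b$3 - dscale e c1 (b$1) - dscale e c2 (b$2) \<notin> range e"
proof -
  have "b$1 = (\<Sum>k\<in>UNIV. dscale e ((vector [1, 0, 0] :: dual^3)$k) (b$k))"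
    "b$2 - dscale e c (b$1) = (\<Sum>k\<in>UNIV. dscale e ((vector [- c, 1, 0] :: dual^3)$k) (b$k))"
    "b$3 - dscale e c1 (b$1) - dscale e c2 (b$2)
      = (\<Sum>k\<in>UNIV. dscale e ((vector [- c1, - c2, 1] :: dual^3)$k) (b$k))"
    by (simp_all add: sum_3 dscale_minus_left)
  then show "b$1 \<notin> range e" "b$2 - dscale e c (b$1) \<notin> range e"
    "b$3 - dscale e c1 (b$1) - dscale e c2 (b$2) \<notin> range e"
    using dbasis_combination_not_in_range[OF b] by (metis vector_3 re_one one_neq_zero)+
qed

lemma orthonormal_dbasis_of_basis_in_dspan:
  assumes f: "orthonormal f" and b: "dbasis e b" and span: "\<forall>k. b$k \<in> dspan f"
  shows "dbasis e f"
proof (rule orthonormal_dbasis[OF f])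
  fix x
  obtain c where "x = (\<Sum>k\<in>UNIV. dscale e (c$k) (b$k))"
    using dbasis_obtain_coeffs[OF b] .
  then show "x \<in> dspan f"
    unfolding sum_3 using span by (simp only:) (intro dspan_add dspan_dscale; simp)
qed

lemma orthonormal_dbasis_exists:
  assumes b: "dbasis e b"
  obtains f where "orthonormal f" "dbasis e f"
proof -
  obtain n1 where n1: "re n1 \<noteq> 0" and n1_unit: "sp (dscale e n1 (b$1)) (dscale e n1 (b$1)) = 1"
    using unit_normalization dbasis_triangular_not_in_range(1)[OF b] by blast
  define f1 where "f1 = dscale e n1 (b$1)"
  have f11: "sp f1 f1 = 1" using n1_unit unfolding f1_def .
  define c21 where "c21 = sp (b$2) f1"
  define g2 where "g2 = b$2 - dscale e c21 f1"
  have "g2 = b$2 - dscale e (c21 * n1) (b$1)" by (simp add: g2_def f1_def dscale_dscale)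
  then obtain n2 where n2: "re n2 \<noteq> 0" and n2_unit: "sp (dscale e n2 g2) (dscale e n2 g2) = 1"
    using unit_normalization dbasis_triangular_not_in_range(2)[OF b] by metis
  define f2 where "f2 = dscale e n2 g2"
  have f22: "sp f2 f2 = 1" using n2_unit unfolding f2_def .
  define c31 where "c31 = sp (b$3) f1"
  define c32 where "c32 = sp (b$3) f2"
  define g3 where "g3 = b$3 - dscale e c31 f1 - dscale e c32 f2"
  have "g3 = b$3 - dscale e (c31 * n1 - c32 * n2 * (c21 * n1)) (b$1) - dscale e (c32 * n2) (b$2)"
    by (simp add: g3_def f2_def g2_def f1_def dscale_dscale dscale_diff_right dscale_diff_left
        algebra_simps)
  then obtain n3 where n3: "re n3 \<noteq> 0" and n3_unit: "sp (dscale e n3 g3) (dscale e n3 g3) = 1"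
    using unit_normalization dbasis_triangular_not_in_range(3)[OF b] by metis
  define f3 where "f3 = dscale e n3 g3"
  have f33: "sp f3 f3 = 1" using n3_unit unfolding f3_def .
  have f21: "sp f2 f1 = 0" by (simp add: f2_def g2_def c21_def f11)
  have f12: "sp f1 f2 = 0" using f21 sp_sym by metis
  have f31: "sp f3 f1 = 0" by (simp add: f3_def g3_def c31_def f11 f21)
  have f32: "sp f3 f2 = 0" by (simp add: f3_def g3_def c32_def f22 f12)
  have f13: "sp f1 f3 = 0" and f23: "sp f2 f3 = 0" using f31 f32 sp_sym by metis+
  define f where "f = (vector [f1, f2, f3] :: 'm^3)"
  have orth: "orthonormal f"
    unfolding orthonormal_def forall_3 f_def by (simp add: f11 f22 f33 f12 f13 f21 f23 f31 f32)
  have f_span: "f1 \<in> dspan f" "f2 \<in> dspan f" "f3 \<in> dspan f"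
    using dspan_basis[of f 1] dspan_basis[of f 2] dspan_basis[of f 3] by (simp_all add: f_def)
  have "b$1 = dscale e (dual_inverse n1) f1"
    and "b$2 = dscale e (dual_inverse n2) f2 + dscale e c21 f1"
    and "b$3 = dscale e (dual_inverse n3) f3 + dscale e c31 f1 + dscale e c32 f2"
    using dscale_dual_inverse n1 n2 n3 by (simp_all add: f1_def f2_def f3_def g2_def g3_def)
  then have "\<forall>k. b$k \<in> dspan f"
    unfolding forall_3 by (simp only:) (intro conjI dspan_add dspan_dscale f_span)
  then show ?thesis using that orth orthonormal_dbasis_of_basis_in_dspan[OF orth b] by blast
qed

lemma orientation_class:
  obtains b0 where "dbasis e b0" "OR = {b. dbasis e b \<and> same_or e b0 b}"
proof -
  have "orientation e OR" using dmodule3 by (simp add: dmodule3_def)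
  then show ?thesis using that unfolding orientation_def by metis
qed

lemma orthonormal_re_matrix_nonsingular:
  assumes f: "orthonormal f" and A: "\<forall>j. f$j = (\<Sum>k\<in>UNIV. dscale e (A$j$k) (b$k))"
  shows "det (\<chi> j k. re (A$j$k)) \<noteq> 0"
proof
  define R where "R = (\<chi> j k. re (A$j$k))"
  assume "det (\<chi> j k. re (A$j$k)) = 0"
  then have "\<not> inj ((*v) (transpose R))"
    using det_nz_iff_inj[of "(*v) (transpose R)"] by (simp add: det_transpose R_def)
  then obtain l where l: "transpose R *v l = 0" "l \<noteq> 0"
    using linear_injective_0[of "(*v) (transpose R)"] by auto
  have lR: "(\<Sum>j\<in>UNIV. l$j * re (A$j$k)) = 0" for k
    using l(1) by (simp add: vec_eq_iff matrix_vector_mult_def transpose_def R_def mult.commute)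
  define y where "y = (\<Sum>j\<in>UNIV. l$j *\<^sub>R f$j)"
  have "y - (\<Sum>j\<in>UNIV. l$j *\<^sub>R (\<Sum>k\<in>UNIV. re (A$j$k) *\<^sub>R b$k))
      = (\<Sum>j\<in>UNIV. l$j *\<^sub>R (f$j - (\<Sum>k\<in>UNIV. re (A$j$k) *\<^sub>R b$k)))"
    by (simp add: y_def scaleR_diff_right sum_subtractf)
  also have "\<dots> \<in> range e"
  proof (intro subspace_sum[OF subspace_range_e] subspace_scale[OF subspace_range_e])
    show "f$j - (\<Sum>k\<in>UNIV. re (A$j$k) *\<^sub>R b$k) \<in> range e" for j
      using dscale_sum_minus_re_sum[of "A$j" b] A by simp
  qed
  also have "(\<Sum>j\<in>UNIV. l$j *\<^sub>R (\<Sum>k\<in>UNIV. re (A$j$k) *\<^sub>R b$k))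
      = (\<Sum>k\<in>UNIV. (\<Sum>j\<in>UNIV. l$j * re (A$j$k)) *\<^sub>R b$k)"
    unfolding scaleR_sum_right scaleR_sum_left scaleR_scaleR by (rule sum.swap)
  finally have "y \<in> range e" by (simp add: lR)
  moreover have "re (sp y y) = (\<Sum>j\<in>UNIV. (l$j)\<^sup>2)"
  proof -
    have "sp (f$i) (f$j) = (if i = j then 1 else 0)" for i j
      using f by (simp add: orthonormal_def)
    then show ?thesis by (simp add: y_def sp_sum_left sp_sum_right sum_3 power2_eq_square)
  qed
  ultimately have "(\<Sum>j\<in>UNIV. (l$j)\<^sup>2) = 0"
    using re_sp_self_eq_0_iff by metis
  then have "\<forall>j. l$j = 0"
    using sum_nonneg_eq_0_iff[of UNIV "\<lambda>j. (l$j)\<^sup>2"] by simp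
  then show False using l(2) by (simp add: vec_eq_iff)
qed

lemma orthonormal_dbasis_flip:
  assumes "orthonormal f" "dbasis e f"
  shows "orthonormal (vector [f$1, f$2, - f$3])" "dbasis e (vector [f$1, f$2, - f$3])"
proof -
  show orth: "orthonormal (vector [f$1, f$2, - f$3])"
    using assms(1) unfolding orthonormal_def forall_3 by simp
  have "x \<in> dspan (vector [f$1, f$2, - f$3])" for x
  proof -
    obtain c where c: "x = (\<Sum>k\<in>UNIV. dscale e (c$k) (f$k))"
      using dbasis_obtain_coeffs[OF assms(2)] .
    have "x = (\<Sum>k\<in>UNIV. dscale e ((vector [c$1, c$2, - c$3] :: dual^3)$k)
                                   ((vector [f$1, f$2, - f$3] :: 'm^3)$k))"
      by (simp add: c sum_3 dscale_minus_left dscale_minus_right)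
    then show ?thesis unfolding dspan_def by blast
  qed
  then show "dbasis e (vector [f$1, f$2, - f$3])" by (rule orthonormal_dbasis[OF orth])
qed

lemma positive_orthonormal_frame_exists:
  obtains f where "orthonormal f" "dbasis e f" "f \<in> OR"
proof -
  obtain b0 where b0: "dbasis e b0" and OR_eq: "OR = {b. dbasis e b \<and> same_or e b0 b}"
    by (rule orientation_class)
  obtain f where orth: "orthonormal f" and f: "dbasis e f"
    using orthonormal_dbasis_exists[OF b0] by blast
  obtain A where A: "\<forall>j. f$j = (\<Sum>k\<in>UNIV. dscale e (A$j$k) (b0$k))"
    using dbasis_obtain_matrix[OF b0] by blast
  show ?thesis
  proof (cases "det (\<chi> j k. re (A$j$k)) > 0")
    case True
    then show ?thesis using that orth f A unfolding OR_eq same_or_def by blast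
  next
    case False
    then have neg: "det (\<chi> j k. re (A$j$k)) < 0"
      using orthonormal_re_matrix_nonsingular[OF orth A] by linarith
    define f' where "f' = (vector [f$1, f$2, - f$3] :: 'm^3)"
    define A' where "A' = (\<chi> j k. if j = 3 then - A$j$k else A$j$k)"
    have "\<forall>j. f'$j = (\<Sum>k\<in>UNIV. dscale e (A'$j$k) (b0$k))"
      unfolding forall_3 using A by (simp add: f'_def A'_def dscale_minus_left sum_negf)
    moreover have "det (\<chi> j k. re (A'$j$k)) = - det (\<chi> j k. re (A$j$k))"
      by (simp add: det_3 A'_def)
    ultimately have "same_or e b0 f'" unfolding same_or_def using neg by force
    then show ?thesis
      using that orthonormal_dbasis_flip[OF orth f] unfolding OR_eq f'_def by blast
  qed
qed

text \<open>The orientation only depends on the real parts of the transition matrix, so it is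
  invariant under perturbations in \<open>\<epsilon>M\<close>.\<close>
lemma orientation_mod_e:
  assumes g: "g \<in> OR" and h: "dbasis e h" and hg: "\<forall>j. h$j - g$j \<in> range e"
  shows "h \<in> OR"
proof -
  obtain b0 where b0: "dbasis e b0" and OR_eq: "OR = {b. dbasis e b \<and> same_or e b0 b}"
    by (rule orientation_class)
  obtain A where A: "\<forall>j. g$j = (\<Sum>k\<in>UNIV. dscale e (A$j$k) (b0$k))"
    and det_A: "det (\<chi> j k. re (A$j$k)) > 0"
    using g unfolding OR_eq same_or_def by blast
  have "\<forall>j. \<exists>w. h$j - g$j = e w" using hg by blast
  then obtain w where w: "\<forall>j. h$j - g$j = e (w j)" by (rule choice[THEN exE])
  obtain C where C: "\<forall>j. (\<chi> j. w j)$j = (\<Sum>k\<in>UNIV. dscale e (C$j$k) (b0$k))"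
    using dbasis_obtain_matrix[OF b0] by blast
  define A' where "A' = (\<chi> j k. A$j$k + Dual 0 (re (C$j$k)))"
  have "h$j = (\<Sum>k\<in>UNIV. dscale e (A'$j$k) (b0$k))" for j
  proof -
    have "h$j = g$j + e (w j)" using w by (simp add: algebra_simps)
    moreover have "e (w j) = (\<Sum>k\<in>UNIV. re (C$j$k) *\<^sub>R e (b0$k))"
      using C by (simp add: e_dscale)
    moreover have "(\<Sum>k\<in>UNIV. dscale e (A'$j$k) (b0$k))
        = (\<Sum>k\<in>UNIV. dscale e (A$j$k) (b0$k)) + (\<Sum>k\<in>UNIV. re (C$j$k) *\<^sub>R e (b0$k))"
      by (simp add: A'_def dscale_add_left dscale_eps sum.distrib)
    ultimately show ?thesis using A by simp
  qed
  moreover have "(\<chi> j k. re (A'$j$k)) = (\<chi> j k. re (A$j$k))" by (simp add: A'_def)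
  ultimately have "same_or e b0 h" unfolding same_or_def using det_A by auto
  then show ?thesis using h OR_eq by simp
qed

end

subsection \<open>Screws in \<open>\<real>\<^sup>3\<close>\<close>

lemma cross_eq_0_imp_parallel:
  fixes a b :: "real^3"
  assumes "a \<noteq> 0" "a \<times> b = 0"
  shows "b = ((a \<bullet> b) / (a \<bullet> a)) *\<^sub>R a"
proof -
  have "a \<times> (a \<times> b) = 0" using assms by simp
  then have "(a \<bullet> b) *\<^sub>R a = (a \<bullet> a) *\<^sub>R b" by (simp add: Lagrange)
  moreover have "a \<bullet> a \<noteq> 0" using assms by simp
  ultimately have "b = (1 / (a \<bullet> a)) *\<^sub>R ((a \<bullet> b) *\<^sub>R a)" by simp
  then show ?thesis by simp
qed

lemma inner_cross_skew: "a \<bullet> (p \<times> b) + (p \<times> a) \<bullet> b = 0"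
  for a b p :: "real^3"
  by (simp add: cross3_simps)

lemma skew_obtain_cross:
  fixes B :: "3 \<Rightarrow> real^3"
  assumes skew: "\<And>i j. (B j)$i + (B i)$j = 0"
  obtains p where "\<And>i. p \<times> axis i 1 = B i"
proof
  fix i
  show "vector [(B 2)$3, (B 3)$1, (B 1)$2] \<times> axis i 1 = B i"
    using exhaust_3[of i] skew[of 1 1] skew[of 2 2] skew[of 3 3] skew[of 1 2] skew[of 1 3] skew[of 2 3]
      skew[of 2 1] skew[of 3 1] skew[of 3 2]
    unfolding vec_eq_iff forall_3 by (auto simp: cross3_simps axis_def)
qed

definition screw_pitch :: "real^3 \<Rightarrow> real^3 \<Rightarrow> real" where
  "screw_pitch w v = (w \<bullet> v) / (w \<bullet> w)"

definition screw_line :: "real^3 \<Rightarrow> real^3 \<Rightarrow> (real^3) set" where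
  "screw_line w v = {p. p \<times> w = v - screw_pitch w v *\<^sub>R w}"

lemma screw_pitch_scaleR: "c \<noteq> 0 \<Longrightarrow> screw_pitch (c *\<^sub>R w) (c *\<^sub>R v) = screw_pitch w v"
  by (simp add: screw_pitch_def)

lemma screw_line_scaleR:
  assumes c: "c \<noteq> 0"
  shows "screw_line (c *\<^sub>R w) (c *\<^sub>R v) = screw_line w v"
proof -
  have "p \<times> (c *\<^sub>R w) = c *\<^sub>R v - screw_pitch w v *\<^sub>R (c *\<^sub>R w)
      \<longleftrightarrow> c *\<^sub>R (p \<times> w) = c *\<^sub>R (v - screw_pitch w v *\<^sub>R w)" for p
    by (simp add: cross_mult_right algebra_simps)
  then show ?thesis
    using c by (simp add: screw_line_def screw_pitch_scaleR)
qed

lemma mem_screw_line_iff_cross: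
  assumes w: "w \<noteq> 0"
  shows "p \<in> screw_line w v \<longleftrightarrow> (v - p \<times> w) \<times> w = 0"
proof
  assume "p \<in> screw_line w v"
  then show "(v - p \<times> w) \<times> w = 0" by (simp add: screw_line_def cross_mult_left)
next
  assume "(v - p \<times> w) \<times> w = 0"
  then have "w \<times> (v - p \<times> w) = 0" using cross_skew[of "v - p \<times> w" w] by simp
  then have "v - p \<times> w = ((w \<bullet> (v - p \<times> w)) / (w \<bullet> w)) *\<^sub>R w"
    by (rule cross_eq_0_imp_parallel[OF w])
  also have "w \<bullet> (v - p \<times> w) = w \<bullet> v" by (simp add: inner_diff_right dot_cross_self)
  finally show "p \<in> screw_line w v" by (simp add: screw_line_def screw_pitch_def algebra_simps)
qed

lemma screw_line_base_point:
  assumes "w \<noteq> 0"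
  shows "(1 / (w \<bullet> w)) *\<^sub>R (w \<times> v) \<in> screw_line w v"
proof -
  have "(w \<times> v) \<times> w = (w \<bullet> w) *\<^sub>R v - (w \<bullet> v) *\<^sub>R w"
    using cross_skew[of "w \<times> v" w] by (simp add: Lagrange)
  then show ?thesis
    using assms by (simp add: screw_line_def screw_pitch_def cross_mult_left scaleR_diff_right)
qed

lemma screw_line_translate: "p \<in> screw_line w v \<Longrightarrow> p + t *\<^sub>R w \<in> screw_line w v"
  by (simp add: screw_line_def cross_add_left cross_mult_left)

lemma screw_line_diff_parallel:
  assumes "w \<noteq> 0" "p \<in> screw_line w v" "p' \<in> screw_line w v"
  obtains t where "p' = p + t *\<^sub>R w"
proof -
  have "(p' - p) \<times> w = 0"
    using assms(2,3) by (simp add: screw_line_def Cross3.left_diff_distrib)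
  then have "w \<times> (p' - p) = 0" using cross_skew[of "p' - p" w] by simp
  then have "p' - p = ((w \<bullet> (p' - p)) / (w \<bullet> w)) *\<^sub>R w"
    by (rule cross_eq_0_imp_parallel[OF assms(1)])
  then show ?thesis using that by (metis add.commute diff_add_cancel)
qed

lemma same_screw_line_pitch_imp_proportional:
  fixes w1 v1 w2 v2 :: "real^3"
  assumes w1: "w1 \<noteq> 0" and line: "screw_line w1 v1 = screw_line w2 v2"
    and pitch: "screw_pitch w1 v1 = screw_pitch w2 v2"
  obtains k where "w2 = k *\<^sub>R w1" "v2 = k *\<^sub>R v1"
proof -
  define p where "p = (1 / (w1 \<bullet> w1)) *\<^sub>R (w1 \<times> v1)"
  have p1: "p \<in> screw_line w1 v1" unfolding p_def by (rule screw_line_base_point[OF w1])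
  then have p2: "p \<in> screw_line w2 v2" "p + 1 *\<^sub>R w1 \<in> screw_line w2 v2"
    using line screw_line_translate by blast+
  then have "w1 \<times> w2 = 0" by (simp add: screw_line_def cross_add_left)
  define k where "k = (w1 \<bullet> w2) / (w1 \<bullet> w1)"
  have w2: "w2 = k *\<^sub>R w1"
    unfolding k_def by (rule cross_eq_0_imp_parallel[OF w1 \<open>w1 \<times> w2 = 0\<close>])
  have "v2 = p \<times> w2 + screw_pitch w2 v2 *\<^sub>R w2"
    using p2(1) by (simp add: screw_line_def)
  also have "\<dots> = k *\<^sub>R (p \<times> w1 + screw_pitch w1 v1 *\<^sub>R w1)"
    unfolding pitch by (simp add: w2 cross_mult_right scaleR_add_right)
  also have "p \<times> w1 + screw_pitch w1 v1 *\<^sub>R w1 = v1"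
    using p1 by (simp add: screw_line_def)
  finally show ?thesis using that w2 by blast
qed

lemma screws_dependent_iff:
  fixes w1 v1 w2 v2 :: "real^3"
  assumes w1: "w1 \<noteq> 0" and w2: "w2 \<noteq> 0"
  shows "(\<exists>c1 c2. (c1 \<noteq> 0 \<or> c2 \<noteq> 0) \<and> c1 *\<^sub>R w1 + c2 *\<^sub>R w2 = 0 \<and> c1 *\<^sub>R v1 + c2 *\<^sub>R v2 = 0)
    \<longleftrightarrow> screw_line w1 v1 = screw_line w2 v2 \<and> screw_pitch w1 v1 = screw_pitch w2 v2"
proof
  assume "\<exists>c1 c2. (c1 \<noteq> 0 \<or> c2 \<noteq> 0) \<and> c1 *\<^sub>R w1 + c2 *\<^sub>R w2 = 0 \<and> c1 *\<^sub>R v1 + c2 *\<^sub>R v2 = 0"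
  then obtain c1 c2 where c: "c1 \<noteq> 0 \<or> c2 \<noteq> 0"
    and cw: "c1 *\<^sub>R w1 + c2 *\<^sub>R w2 = 0" and cv: "c1 *\<^sub>R v1 + c2 *\<^sub>R v2 = 0" by blast
  have c2: "c2 \<noteq> 0" using c cw w1 by auto
  have solve: "y = (- c1 / c2) *\<^sub>R x" if "c1 *\<^sub>R x + c2 *\<^sub>R y = 0" for x y :: "real^3"
  proof -
    have "y = (1 / c2) *\<^sub>R (c2 *\<^sub>R y)" using c2 by simp
    also have "c2 *\<^sub>R y = - (c1 *\<^sub>R x)" using that by (simp add: eq_neg_iff_add_eq_0 add.commute)
    finally show ?thesis by simp
  qed
  define l where "l = - c1 / c2"
  have "w2 = l *\<^sub>R w1" "v2 = l *\<^sub>R v1"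
    using solve cw cv unfolding l_def by blast+
  moreover have "l \<noteq> 0" using calculation w2 by auto
  ultimately show "screw_line w1 v1 = screw_line w2 v2 \<and> screw_pitch w1 v1 = screw_pitch w2 v2"
    by (simp add: screw_line_scaleR screw_pitch_scaleR)
next
  assume "screw_line w1 v1 = screw_line w2 v2 \<and> screw_pitch w1 v1 = screw_pitch w2 v2"
  then obtain k where "w2 = k *\<^sub>R w1" "v2 = k *\<^sub>R v1"
    using same_screw_line_pitch_imp_proportional[OF w1] by blast
  then have "k *\<^sub>R w1 + (- 1) *\<^sub>R w2 = 0 \<and> k *\<^sub>R v1 + (- 1) *\<^sub>R v2 = 0" by simp
  then show "\<exists>c1 c2. (c1 \<noteq> 0 \<or> c2 \<noteq> 0) \<and> c1 *\<^sub>R w1 + c2 *\<^sub>R w2 = 0 \<and> c1 *\<^sub>R v1 + c2 *\<^sub>R v2 = 0"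
    by (metis neg_equal_0_iff_equal zero_neq_one)
qed

text \<open>The moment of the unit screw on the axis of \<open>(w, v)\<close>.\<close>
definition unit_moment :: "real^3 \<Rightarrow> real^3 \<Rightarrow> real^3" where
  "unit_moment w v = (1 / norm w) *\<^sub>R (v - screw_pitch w v *\<^sub>R w)"

lemma scaleR_norm_sgn: "norm w *\<^sub>R sgn w = w"
  for w :: "'a::real_normed_vector"
  by (cases "w = 0") (simp_all add: sgn_div_norm)

lemma inner_sgn_unit_moment: "sgn w \<bullet> unit_moment w v = 0"
  by (cases "w = 0") (simp_all add: sgn_div_norm unit_moment_def screw_pitch_def inner_diff_right)

lemma scaleR_norm_unit_moment: "w \<noteq> 0 \<Longrightarrow> norm w *\<^sub>R unit_moment w v + screw_pitch w v *\<^sub>R w = v"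
  by (simp add: unit_moment_def)

lemma mem_screw_line_iff_unit_moment:
  assumes "w \<noteq> 0"
  shows "p \<in> screw_line w v \<longleftrightarrow> unit_moment w v = p \<times> sgn w"
proof -
  have "unit_moment w v = p \<times> sgn w
      \<longleftrightarrow> (1 / norm w) *\<^sub>R (v - screw_pitch w v *\<^sub>R w) = (1 / norm w) *\<^sub>R (p \<times> w)"
    by (simp add: unit_moment_def sgn_div_norm cross_mult_right divide_inverse_commute)
  also have "\<dots> \<longleftrightarrow> p \<times> w = v - screw_pitch w v *\<^sub>R w" using assms by auto
  finally show ?thesis by (simp add: screw_line_def)
qed

text \<open>For \<open>d, w \<noteq> 0\<close> this says that the line \<open>q + \<real>d\<close> is orthogonal to \<open>w\<close> and meets the axis
  of the screw \<open>(w, v)\<close> (\<open>normal_line_meets_screw_line\<close>); unlike that description, it is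
  linear in \<open>(w, v)\<close>.\<close>
definition normal_line :: "real^3 \<Rightarrow> real^3 \<Rightarrow> real^3 \<Rightarrow> real^3 \<Rightarrow> bool" where
  "normal_line q d w v \<longleftrightarrow> d \<bullet> w = 0 \<and> (v - q \<times> w) \<bullet> d = 0"

lemma normal_line_combination:
  assumes "normal_line q d w1 v1" "normal_line q d w2 v2"
  shows "normal_line q d (a *\<^sub>R w1 + b *\<^sub>R w2) (a *\<^sub>R v1 + b *\<^sub>R v2)"
proof -
  have "(a *\<^sub>R v1 + b *\<^sub>R v2 - q \<times> (a *\<^sub>R w1 + b *\<^sub>R w2)) \<bullet> d
      = a * ((v1 - q \<times> w1) \<bullet> d) + b * ((v2 - q \<times> w2) \<bullet> d)"
    by (simp add: cross_add_right cross_mult_right inner_diff_left inner_add_left algebra_simps)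
  then show ?thesis using assms by (simp add: normal_line_def inner_add_right)
qed

lemma normal_line_meets_screw_line:
  fixes w v q d :: "real^3"
  assumes w: "w \<noteq> 0" and d: "d \<noteq> 0" and normal: "normal_line q d w v"
  obtains t where "q + t *\<^sub>R d \<in> screw_line w v"
proof -
  define r where "r = (v - q \<times> w) \<times> w"
  have "d \<times> r = (d \<bullet> w) *\<^sub>R (v - q \<times> w) - (d \<bullet> (v - q \<times> w)) *\<^sub>R w"
    by (simp add: r_def Lagrange)
  also have "\<dots> = 0" using normal by (simp add: normal_line_def inner_commute)
  finally have r: "r = ((d \<bullet> r) / (d \<bullet> d)) *\<^sub>R d"
    by (rule cross_eq_0_imp_parallel[OF d])
  define t where "t = - (d \<bullet> r) / ((d \<bullet> d) * (w \<bullet> w))"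
  have "(d \<times> w) \<times> w = - ((w \<bullet> w) *\<^sub>R d)"
    using normal cross_skew[of "d \<times> w" w] by (simp add: normal_line_def Lagrange inner_commute)
  then have "(v - (q + t *\<^sub>R d) \<times> w) \<times> w = r + (t * (w \<bullet> w)) *\<^sub>R d"
    by (simp add: r_def cross_add_left cross_mult_left Cross3.left_diff_distrib)
  also have "\<dots> = 0"
    using w by (subst r) (simp add: t_def field_simps)
  finally show ?thesis using that mem_screw_line_iff_cross[OF w] by blast
qed

lemma common_normal_line_skew:
  fixes w1 w2 v1 v2 :: "real^3"
  assumes skew: "w1 \<times> w2 \<noteq> 0"
  shows "\<exists>q d. d \<noteq> 0 \<and> normal_line q d w1 v1 \<and> normal_line q d w2 v2"
proof (intro exI conjI)
  define d where "d = w1 \<times> w2"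
  define q where "q = (1 / (d \<bullet> d)) *\<^sub>R ((v2 \<bullet> d) *\<^sub>R w1 - (v1 \<bullet> d) *\<^sub>R w2)"
  have dd: "d \<bullet> d \<noteq> 0" using skew by (simp add: d_def)
  have triple: "(w1 \<times> d) \<bullet> w2 = - (d \<bullet> d)" "w2 \<bullet> (w1 \<times> d) = - (d \<bullet> d)"
      "(w2 \<times> d) \<bullet> w1 = d \<bullet> d" "w1 \<bullet> (w2 \<times> d) = d \<bullet> d"
      "(w1 \<times> d) \<bullet> w1 = 0" "w1 \<bullet> (w1 \<times> d) = 0" "(w2 \<times> d) \<bullet> w2 = 0" "w2 \<bullet> (w2 \<times> d) = 0"
    by (simp_all add: d_def cross3_simps)
  have "(q \<times> w1) \<bullet> d = (w1 \<times> d) \<bullet> q" "(q \<times> w2) \<bullet> d = (w2 \<times> d) \<bullet> q"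
    by (rule cross_triple)+
  then have "(q \<times> w1) \<bullet> d = v1 \<bullet> d" "(q \<times> w2) \<bullet> d = v2 \<bullet> d"
    using dd by (simp_all add: q_def inner_add_right inner_diff_right triple)
  moreover have "d \<bullet> w1 = 0" "d \<bullet> w2 = 0"
    by (simp_all add: d_def dot_cross_self inner_commute)
  ultimately show "normal_line q d w1 v1" "normal_line q d w2 v2"
    by (simp_all add: normal_line_def inner_diff_left)
  show "d \<noteq> 0" using skew by (simp add: d_def)
qed

lemma common_normal_line_parallel:
  fixes w1 v1 v2 :: "real^3"
  assumes w1: "w1 \<noteq> 0"
  shows "\<exists>q d. d \<noteq> 0 \<and> normal_line q d w1 v1 \<and> normal_line q d (k *\<^sub>R w1) v2"
proof -
  define u where "u = v2 - k *\<^sub>R v1"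
  obtain d where d: "d \<noteq> 0" "d \<bullet> w1 = 0" "d \<bullet> u = 0"
  proof (cases "w1 \<times> u = 0")
    case False
    then show ?thesis using that[of "w1 \<times> u"] by (simp add: dot_cross_self inner_commute)
  next
    case True
    obtain i where i: "w1 \<times> axis i 1 \<noteq> 0" using cross_basis_nonzero[OF w1] by blast
    have u: "u = ((w1 \<bullet> u) / (w1 \<bullet> w1)) *\<^sub>R w1" by (rule cross_eq_0_imp_parallel[OF w1 True])
    have "(w1 \<times> axis i 1) \<bullet> u = 0" by (subst u) (simp add: dot_cross_self)
    then show ?thesis using that[of "w1 \<times> axis i 1"] i by (simp add: dot_cross_self inner_commute)
  qed
  define q where "q = (1 / (w1 \<bullet> w1)) *\<^sub>R (w1 \<times> v1)"
  have "q \<in> screw_line w1 v1" unfolding q_def by (rule screw_line_base_point[OF w1])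
  then have "v1 - q \<times> w1 = screw_pitch w1 v1 *\<^sub>R w1" by (simp add: screw_line_def)
  then have "normal_line q d w1 v1" using d by (simp add: normal_line_def inner_commute)
  moreover have "normal_line q d 0 u" using d by (simp add: normal_line_def inner_commute)
  ultimately have "normal_line q d (k *\<^sub>R w1 + 1 *\<^sub>R 0) (k *\<^sub>R v1 + 1 *\<^sub>R u)"
    by (rule normal_line_combination)
  moreover have "k *\<^sub>R v1 + 1 *\<^sub>R u = v2" by (simp add: u_def)
  ultimately have "normal_line q d (k *\<^sub>R w1) v2" by simp
  then show ?thesis using d(1) \<open>normal_line q d w1 v1\<close> by blast
qed

lemma common_normal_line_exists:
  fixes w1 w2 v1 v2 :: "real^3"
  assumes "w1 \<noteq> 0"
  shows "\<exists>q d. d \<noteq> 0 \<and> normal_line q d w1 v1 \<and> normal_line q d w2 v2"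
proof (cases "w1 \<times> w2 = 0")
  case True
  obtain k where "w2 = k *\<^sub>R w1"
    using cross_eq_0_imp_parallel[OF assms True] by blast
  then show ?thesis using common_normal_line_parallel[OF assms, of v1 k v2] by simp
qed (rule common_normal_line_skew)

lemma common_normal_line_of_combination:
  fixes x1 x2 x3 y1 y2 y3 :: "real^3"
  assumes x1: "x1 \<noteq> 0" and c: "c \<noteq> 0"
    and x: "a *\<^sub>R x1 + b *\<^sub>R x2 + c *\<^sub>R x3 = 0" and y: "a *\<^sub>R y1 + b *\<^sub>R y2 + c *\<^sub>R y3 = 0"
  shows "\<exists>q d. d \<noteq> 0 \<and> normal_line q d x1 y1 \<and> normal_line q d x2 y2 \<and> normal_line q d x3 y3"
proof -
  have solve: "z = (- a / c) *\<^sub>R p + (- b / c) *\<^sub>R r"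
    if "a *\<^sub>R p + b *\<^sub>R r + c *\<^sub>R z = 0" for p r z :: "real^3"
  proof -
    have "z = (1 / c) *\<^sub>R (c *\<^sub>R z)" using c by simp
    also have "c *\<^sub>R z = - (a *\<^sub>R p + b *\<^sub>R r)" using that by (metis eq_neg_iff_add_eq_0 add.commute)
    finally show ?thesis by (simp add: scaleR_add_right scaleR_diff_right divide_inverse_commute)
  qed
  obtain q d where "d \<noteq> 0" "normal_line q d x1 y1" "normal_line q d x2 y2"
    using common_normal_line_exists[OF x1] by blast
  moreover have "normal_line q d x3 y3"
    by (subst solve[OF x], subst solve[OF y]) (rule normal_line_combination[OF calculation(2,3)])
  ultimately show ?thesis by blast
qed

lemma dependent_screws_common_normal_line:
  fixes w1 w2 w3 v1 v2 v3 :: "real^3"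
  assumes w: "w1 \<noteq> 0" "w2 \<noteq> 0" and c: "c1 \<noteq> 0 \<or> c2 \<noteq> 0 \<or> c3 \<noteq> 0"
    and cw: "c1 *\<^sub>R w1 + c2 *\<^sub>R w2 + c3 *\<^sub>R w3 = 0" and cv: "c1 *\<^sub>R v1 + c2 *\<^sub>R v2 + c3 *\<^sub>R v3 = 0"
  shows "\<exists>q d. d \<noteq> 0 \<and> normal_line q d w1 v1 \<and> normal_line q d w2 v2 \<and> normal_line q d w3 v3"
proof -
  consider "c3 \<noteq> 0" | "c2 \<noteq> 0" | "c1 \<noteq> 0" using c by blast
  then show ?thesis
  proof cases
    case 1
    then show ?thesis using common_normal_line_of_combination[OF w(1) 1 cw cv] by blast
  next
    case 2
    have "c1 *\<^sub>R w1 + c3 *\<^sub>R w3 + c2 *\<^sub>R w2 = 0" "c1 *\<^sub>R v1 + c3 *\<^sub>R v3 + c2 *\<^sub>R v2 = 0"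
      using cw cv by (simp_all add: algebra_simps)
    then show ?thesis using common_normal_line_of_combination[OF w(1) 2] by blast
  next
    case 3
    have "c2 *\<^sub>R w2 + c3 *\<^sub>R w3 + c1 *\<^sub>R w1 = 0" "c2 *\<^sub>R v2 + c3 *\<^sub>R v3 + c1 *\<^sub>R v1 = 0"
      using cw cv by (simp_all add: algebra_simps)
    then show ?thesis using common_normal_line_of_combination[OF w(2) 3] by blast
  qed
qed

subsection \<open>Coordinates relative to an oriented frame\<close>

lemma levi_sum_eq_cross: "(\<chi> j. \<Sum>k\<in>UNIV. levi i j k * d$k) = d \<times> axis i 1"
  unfolding vec_eq_iff forall_3 using exhaust_3[of i]
  by (auto simp: levi_def sum_3 cross3_simps axis_def)

lemma sum_scaleR_axis: "(\<Sum>k\<in>UNIV. c k *\<^sub>R (axis k 1 :: real^'n)) = (\<chi> k. c k)"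
  by (simp add: vec_eq_iff axis_def if_distrib cong: if_cong)

lemma sum_scaleR_cross_axis: "(\<Sum>k\<in>UNIV. c k *\<^sub>R (q \<times> axis k 1)) = q \<times> (\<chi> k. c k)"
  by (simp add: sum_3 cross3_simps axis_def)

locale oriented_frame = dual_module e sp OR
  for e :: "'m::real_vector \<Rightarrow> 'm" and sp :: "'m \<Rightarrow> 'm \<Rightarrow> dual" and OR :: "('m^3) set" +
  fixes f :: "'m^3"
  assumes orthonormal_f: "orthonormal f" and dbasis_f: "dbasis e f" and f_in_OR: "f \<in> OR"
begin

text \<open>\<open>of_coords a b\<close> is \<open>\<Sum>k. (a\<^sub>k + \<epsilon> b\<^sub>k) f\<^sub>k\<close>; a pair \<open>(w, v)\<close> is a screw in
  Pluecker coordinates, \<open>w\<close> its direction and \<open>v\<close> its moment.\<close>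
definition of_coords :: "real^3 \<Rightarrow> real^3 \<Rightarrow> 'm" where
  "of_coords a b = (\<Sum>k\<in>UNIV. a$k *\<^sub>R f$k) + (\<Sum>k\<in>UNIV. b$k *\<^sub>R e (f$k))"

lemma of_coords_dscale_sum: "of_coords a b = (\<Sum>k\<in>UNIV. dscale e ((\<chi> k. Dual (a$k) (b$k))$k) (f$k))"
  by (simp add: of_coords_def dscale_def sum.distrib)

lemma of_coords_add: "of_coords (a + a') (b + b') = of_coords a b + of_coords a' b'"
  by (simp add: of_coords_def scaleR_add_left sum.distrib algebra_simps)

lemma of_coords_scaleR: "of_coords (c *\<^sub>R a) (c *\<^sub>R b) = c *\<^sub>R of_coords a b"
  by (simp add: of_coords_def scaleR_sum_right scaleR_add_right)

lemma of_coords_zero [simp]: "of_coords 0 0 = 0"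
  by (simp add: of_coords_def)

lemma of_coords_diff: "of_coords (a - a') (b - b') = of_coords a b - of_coords a' b'"
  using of_coords_add[of a "- a'" b "- b'"] of_coords_scaleR[of "- 1" a' b'] by simp

lemma of_coords_sum: "of_coords (\<Sum>i\<in>S. a i) (\<Sum>i\<in>S. b i) = (\<Sum>i\<in>S. of_coords (a i) (b i))"
  by (induction S rule: infinite_finite_induct) (simp_all add: of_coords_add)

lemma of_coords_combination:
  "c1 *\<^sub>R of_coords w1 v1 + c2 *\<^sub>R of_coords w2 v2
    = of_coords (c1 *\<^sub>R w1 + c2 *\<^sub>R w2) (c1 *\<^sub>R v1 + c2 *\<^sub>R v2)"
  by (simp add: of_coords_add of_coords_scaleR)

lemma e_of_coords [simp]: "e (of_coords a b) = of_coords 0 a"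
  by (simp add: of_coords_def)

lemma sp_of_coords: "sp (of_coords a b) (of_coords a' b') = Dual (a \<bullet> a') (a \<bullet> b' + b \<bullet> a')"
proof -
  have coeff: "sp (of_coords a b) (f$j) = Dual (a$j) (b$j)" for j
    using orthonormal_coeff[OF orthonormal_f, of "\<chi> k. Dual (a$k) (b$k)" j] of_coords_dscale_sum[of a b]
    by simp
  have "sp (of_coords a b) (of_coords a' b') = (\<Sum>k\<in>UNIV. Dual (a'$k) (b'$k) * Dual (a$k) (b$k))"
    by (simp add: of_coords_dscale_sum[of a' b'] sp_sum_right coeff)
  also have "\<dots> = Dual (a \<bullet> a') (a \<bullet> b' + b \<bullet> a')"
    by (simp add: dual_eq_iff inner_vec_def sum.distrib algebra_simps)
  finally show ?thesis .
qed

lemma of_coords_eq_iff: "of_coords a b = of_coords a' b' \<longleftrightarrow> a = a' \<and> b = b'"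
proof
  assume eq: "of_coords a b = of_coords a' b'"
  have "a$i = a'$i \<and> b$i = b'$i" for i
    using arg_cong[OF eq, of "\<lambda>x. sp x (of_coords (axis i 1) 0)"] by (simp add: sp_of_coords inner_axis)
  then show "a = a' \<and> b = b'" by (simp add: vec_eq_iff)
qed simp

lemma obtain_coords: obtains a b where "x = of_coords a b"
proof -
  obtain c where "x = (\<Sum>k\<in>UNIV. dscale e (c$k) (f$k))"
    using dbasis_obtain_coeffs[OF dbasis_f] .
  then have "x = of_coords (\<chi> k. re (c$k)) (\<chi> k. du (c$k))"
    by (simp add: of_coords_def dscale_def sum.distrib)
  then show ?thesis using that by blast
qed

lemma of_coords_in_range_e_iff: "of_coords a b \<in> range e \<longleftrightarrow> a = 0"
proof
  assume "of_coords a b \<in> range e"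
  then obtain a' b' where "of_coords a b = e (of_coords a' b')"
    by (metis imageE obtain_coords)
  then show "a = 0" by (simp add: of_coords_eq_iff)
next
  assume "a = 0"
  then have "of_coords a b = e (of_coords b 0)" by simp
  then show "of_coords a b \<in> range e" by blast
qed

lemma obtain_coords_not_in_range:
  assumes "z \<notin> range e"
  obtains w v where "z = of_coords w v" "w \<noteq> 0"
  using assms obtain_coords of_coords_in_range_e_iff by metis

lemma dscale_of_coords: "dscale e (Dual r s) (of_coords a b) = of_coords (r *\<^sub>R a) (r *\<^sub>R b + s *\<^sub>R a)"
proof -
  have "dscale e (Dual r s) (of_coords a b) = r *\<^sub>R of_coords a b + s *\<^sub>R of_coords 0 a"
    by (simp add: dscale_def)
  also have "\<dots> = of_coords (r *\<^sub>R a) (r *\<^sub>R b + s *\<^sub>R a)"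
    by (metis of_coords_scaleR of_coords_add scaleR_zero_right add_0_right)
  finally show ?thesis .
qed

lemma frame_eq_of_coords: "f$i = of_coords (axis i 1) 0"
proof -
  have "(\<Sum>k\<in>UNIV. (axis i 1)$k *\<^sub>R f$k) = (\<Sum>k\<in>UNIV. (if k = i then f$k else 0))"
    by (rule sum.cong) (auto simp: axis_def)
  then show ?thesis by (simp add: of_coords_def)
qed

text \<open>The points of \<open>E\<close> are exactly these subspaces, and \<open>Epoint q - Epoint p = q - p\<close>
  (see \<open>Ediff_Epoint\<close>): \<open>p\<close> is the position vector of the point relative to the
  frame.\<close>
definition Epoint :: "real^3 \<Rightarrow> 'm set" where
  "Epoint p = range (\<lambda>a. of_coords a (p \<times> a))"

lemma of_coords_mem_Epoint_iff: "of_coords a b \<in> Epoint p \<longleftrightarrow> b = p \<times> a"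
  by (auto simp: Epoint_def of_coords_eq_iff)

lemma linear_Epoint_param: "linear (\<lambda>a. of_coords a (p \<times> a))"
  by (rule linearI) (simp_all add: cross_add_right cross_mult_right of_coords_add of_coords_scaleR)

lemma Epoint_in_Epts: "Epoint p \<in> Epts e sp"
  unfolding Epts_def
proof (intro CollectI conjI ballI)
  show "subspace (Epoint p)"
    unfolding Epoint_def by (rule linear_subspace_image[OF linear_Epoint_param subspace_UNIV])
  have "inj_on (\<lambda>a. of_coords a (p \<times> a)) (span UNIV)" by (auto simp: inj_on_def of_coords_eq_iff)
  moreover have "dim (UNIV :: (real^3) set) = 3" by simp
  ultimately show "dim (Epoint p) = 3"
    unfolding Epoint_def using dim_image_eq[OF linear_Epoint_param] by metis
  show "du (sp x y) = 0" if "x \<in> Epoint p" "y \<in> Epoint p" for x y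
    using that by (auto simp: Epoint_def sp_of_coords inner_cross_skew)
  have "x = 0" if in_p: "x \<in> Epoint p" and in_e: "x \<in> range e" for x
  proof -
    obtain a where x: "x = of_coords a (p \<times> a)" using in_p unfolding Epoint_def by blast
    with in_e have "a = 0" by (simp add: of_coords_in_range_e_iff)
    with x show "x = 0" by simp
  qed
  moreover have "0 \<in> Epoint p" using of_coords_mem_Epoint_iff[of 0 0 p] by simp
  moreover have "0 \<in> range e" by (metis e_zero rangeI)
  ultimately show "Epoint p \<inter> range e = {0}" by blast
qed

lemma Epoint_inject: "Epoint p = Epoint p' \<longleftrightarrow> p = p'"
proof
  assume eq: "Epoint p = Epoint p'"
  have "of_coords a (p \<times> a) \<in> Epoint p'" for a
    using eq of_coords_mem_Epoint_iff by blast
  then have "(p - p') \<times> a = 0" for a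
    by (simp add: of_coords_mem_Epoint_iff Cross3.left_diff_distrib)
  then show "p = p'" using cross_basis_nonzero[of "p - p'"] by auto
qed simp

definition real_coords :: "'m \<Rightarrow> real^3" where
  "real_coords x = (\<chi> k. re (sp x (f$k)))"

lemma linear_real_coords: "linear real_coords"
  by (rule linearI) (simp_all add: real_coords_def vec_eq_iff)

lemma real_coords_of_coords [simp]: "real_coords (of_coords a b) = a"
  by (simp add: real_coords_def frame_eq_of_coords sp_of_coords inner_axis vec_eq_iff)

text \<open>A point \<open>P\<close> of \<open>E\<close> maps isomorphically onto \<open>V = M/\<epsilon>M\<close>, since \<open>P \<inter> \<epsilon>M = 0\<close> and
  \<open>dim P = 3\<close>.\<close>
lemma Epts_real_coords_surj:
  assumes P: "P \<in> Epts e sp"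
  obtains b where "of_coords a b \<in> P"
proof -
  have sP: "subspace P" and dP: "dim P = 3" and iP: "P \<inter> range e = {0}"
    using P by (auto simp: Epts_def)
  have inj: "inj_on real_coords P"
  proof (rule inj_onI)
    fix x y assume x: "x \<in> P" and y: "y \<in> P" and xy: "real_coords x = real_coords y"
    obtain a b where ab: "x - y = of_coords a b" by (rule obtain_coords)
    have "a = 0" using xy linear_diff[OF linear_real_coords, of x y] ab by simp
    then have "x - y \<in> range e" using ab of_coords_in_range_e_iff by simp
    moreover have "x - y \<in> P" using x y sP subspace_diff by blast
    ultimately have "x - y = 0" using iP by blast
    then show "x = y" by simp
  qed
  obtain B where B: "B \<subseteq> P" "independent B" "P \<subseteq> span B" "card B = dim P"
    using basis_exists[of P] by blast
  have "span B \<subseteq> P" using B(1) sP by (simp add: span_minimal)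
  then have injB: "inj_on real_coords (span B)" by (rule inj_on_subset[OF inj])
  have indep: "independent (real_coords ` B)"
    using linear_independent_injective_image[OF linear_real_coords B(2) injB] .
  have "card (real_coords ` B) = card B"
    using card_image[of real_coords B] injB span_superset[of B] inj_on_subset by blast
  then have "card (real_coords ` B) = 3" using B(4) dP by simp
  then have "dim (span (real_coords ` B)) = 3"
    using eucl.indep_card_eq_dim_span[OF indep] by simp
  then have "span (real_coords ` B) = UNIV" using dim_eq_full[of "real_coords ` B"] by simp
  moreover have "span (real_coords ` B) \<subseteq> real_coords ` P"
    using linear_subspace_image[OF linear_real_coords sP] B(1) by (simp add: span_minimal image_mono)
  ultimately have "real_coords ` P = UNIV" by blast
  then obtain x where "x \<in> P" "real_coords x = a" by (metis UNIV_I imageE)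
  moreover obtain a' b where "x = of_coords a' b" by (rule obtain_coords)
  ultimately show ?thesis using that by auto
qed

lemma Epts_eq_Epoint:
  assumes P: "P \<in> Epts e sp" and sub: "\<And>a. of_coords a (p \<times> a) \<in> P"
  shows "P = Epoint p"
proof
  show "Epoint p \<subseteq> P" using sub by (auto simp: Epoint_def)
  have sP: "subspace P" and iP: "P \<inter> range e = {0}"
    using P by (auto simp: Epts_def)
  show "P \<subseteq> Epoint p"
  proof
    fix x assume "x \<in> P"
    obtain a b where x: "x = of_coords a b" by (rule obtain_coords)
    have "of_coords a b - of_coords a (p \<times> a) \<in> P"
      using \<open>x \<in> P\<close> sub x subspace_diff[OF sP] by blast
    moreover have "of_coords a b - of_coords a (p \<times> a) \<in> range e"
      by (simp add: of_coords_diff[symmetric] of_coords_in_range_e_iff)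
    ultimately have "of_coords 0 (b - p \<times> a) = of_coords 0 0"
      using iP by (simp add: of_coords_diff[symmetric]) blast
    then show "x \<in> Epoint p"
      using of_coords_eq_iff[of 0 "b - p \<times> a" 0 0] by (simp add: x of_coords_mem_Epoint_iff)
  qed
qed

lemma Epts_obtain_Epoint:
  assumes P: "P \<in> Epts e sp"
  obtains p where "P = Epoint p"
proof -
  have sP: "subspace P" and duP: "\<forall>x\<in>P. \<forall>y\<in>P. du (sp x y) = 0"
    using P by (auto simp: Epts_def)
  have "\<forall>i. \<exists>b. of_coords (axis i 1) b \<in> P"
    using Epts_real_coords_surj[OF P] by metis
  then obtain B where B: "\<forall>i. of_coords (axis i 1) (B i) \<in> P"
    by (rule choice[THEN exE])
  have skew: "(B j)$i + (B i)$j = 0" for i j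
  proof -
    have "du (sp (of_coords (axis i 1) (B i)) (of_coords (axis j 1) (B j))) = 0"
      using duP B by blast
    then show ?thesis by (simp add: sp_of_coords inner_axis inner_axis' inner_commute)
  qed
  obtain p where pB: "\<And>i. p \<times> axis i 1 = B i"
    using skew_obtain_cross[OF skew] by blast
  have "of_coords a (p \<times> a) \<in> P" for a
  proof -
    have "of_coords a (p \<times> a) = (\<Sum>i\<in>UNIV. a$i *\<^sub>R of_coords (axis i 1) (B i))"
      by (simp add: of_coords_sum[symmetric] of_coords_scaleR[symmetric] pB[symmetric]
          sum_scaleR_axis sum_scaleR_cross_axis)
    also have "\<dots> \<in> P"
      using B by (intro subspace_sum[OF sP] subspace_scale[OF sP]) auto
    finally show ?thesis .
  qed
  then show ?thesis using that Epts_eq_Epoint[OF P] by blast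
qed

text \<open>The lift of the standard basis of \<open>V\<close> to the point \<open>Epoint q\<close>.\<close>
definition point_frame :: "real^3 \<Rightarrow> 'm^3" where
  "point_frame q = (\<chi> i. of_coords (axis i 1) (q \<times> axis i 1))"

lemma orthonormal_point_frame: "orthonormal (point_frame q)"
  unfolding orthonormal_def
  by (simp add: point_frame_def sp_of_coords inner_axis_axis inner_cross_skew one_dual_def zero_dual_def)

lemma point_frame_combination:
  "(\<Sum>k\<in>UNIV. dscale e (Dual (a$k) (c$k)) (point_frame q $ k)) = of_coords a (q \<times> a + c)"
proof -
  have "(\<Sum>k\<in>UNIV. dscale e (Dual (a$k) (c$k)) (point_frame q $ k))
      = of_coords (\<Sum>k\<in>UNIV. a$k *\<^sub>R axis k 1) (\<Sum>k\<in>UNIV. a$k *\<^sub>R (q \<times> axis k 1) + c$k *\<^sub>R axis k 1)"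
    by (simp add: point_frame_def dscale_of_coords of_coords_sum)
  also have "\<dots> = of_coords a (q \<times> a + c)"
    by (simp add: sum.distrib sum_scaleR_axis sum_scaleR_cross_axis)
  finally show ?thesis .
qed

lemma dbasis_point_frame: "dbasis e (point_frame q)"
proof (rule orthonormal_dbasis[OF orthonormal_point_frame])
  fix x
  obtain a b where "x = of_coords a b" by (rule obtain_coords)
  then have "x = (\<Sum>k\<in>UNIV. dscale e ((\<chi> k. Dual (a$k) ((b - q \<times> a)$k))$k) (point_frame q $ k))"
    using point_frame_combination[of a "b - q \<times> a" q] by simp
  then show "x \<in> dspan (point_frame q)" unfolding dspan_def by blast
qed

lemma point_frame_in_OR: "point_frame q \<in> OR"
proof (rule orientation_mod_e[OF f_in_OR dbasis_point_frame])
  show "\<forall>j. point_frame q $ j - f $ j \<in> range e"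
    by (simp add: point_frame_def frame_eq_of_coords of_coords_diff[symmetric] of_coords_in_range_e_iff)
qed

lemma Ediff_Epoint: "Ediff e sp OR (Epoint q) (Epoint (q + d)) (of_coords d 0)"
  unfolding Ediff_def
proof (intro exI conjI allI)
  fix i j
  show "point_frame q $ i \<in> Epoint q"
    by (simp add: point_frame_def of_coords_mem_Epoint_iff)
  show "re (sp (point_frame q $ i) (point_frame q $ j)) = (if i = j then 1 else 0)"
    using orthonormal_point_frame[of q] by (simp add: orthonormal_def)
next
  show "point_frame q \<in> OR" by (rule point_frame_in_OR)
  have "(\<Sum>k\<in>UNIV. d$k *\<^sub>R point_frame q $ k) = of_coords d (q \<times> d)"
    by (simp add: point_frame_def of_coords_scaleR[symmetric] of_coords_sum[symmetric]
        sum_scaleR_axis sum_scaleR_cross_axis)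
  then show "of_coords d 0 - (\<Sum>k\<in>UNIV. d$k *\<^sub>R point_frame q $ k) \<in> range e"
    by (simp add: of_coords_diff[symmetric] of_coords_in_range_e_iff)
next
  fix i
  have "e (\<Sum>j\<in>UNIV. \<Sum>k\<in>UNIV. (levi i j k * d$k) *\<^sub>R point_frame q $ j)
      = of_coords 0 (\<Sum>j\<in>UNIV. (\<Sum>k\<in>UNIV. levi i j k * d$k) *\<^sub>R axis j 1)"
    by (simp add: point_frame_def scaleR_sum_left of_coords_sum[symmetric]
        of_coords_scaleR[symmetric, where a = 0, simplified])
  also have "\<dots> = of_coords 0 (d \<times> axis i 1)"
    by (simp add: sum_scaleR_axis levi_sum_eq_cross)
  finally show "point_frame q $ i + e (\<Sum>j\<in>UNIV. \<Sum>k\<in>UNIV. (levi i j k * d$k) *\<^sub>R point_frame q $ j)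
      \<in> Epoint (q + d)"
    by (simp add: point_frame_def of_coords_add[symmetric] cross_add_left of_coords_mem_Epoint_iff)
qed

lemma Epoint_mem_Eline: "Epoint (q + t *\<^sub>R d) \<in> Eline e sp OR (Epoint q) (of_coords d 0)"
  unfolding Eline_def
proof (intro CollectI conjI exI)
  show "Epoint (q + t *\<^sub>R d) \<in> Epts e sp" by (rule Epoint_in_Epts)
  show "Ediff e sp OR (Epoint q) (Epoint (q + t *\<^sub>R d)) (of_coords (t *\<^sub>R d) 0)"
    by (rule Ediff_Epoint)
  show "of_coords (t *\<^sub>R d) 0 - t *\<^sub>R of_coords d 0 \<in> range e"
    using of_coords_scaleR[of t d 0] by simp
qed

lemma Epoint_mem_Eplane:
  "Epoint (q + s *\<^sub>R d + t *\<^sub>R n) \<in> Eplane e sp OR (Epoint q) (of_coords d 0) (of_coords n 0)"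
  unfolding Eplane_def
proof (intro CollectI conjI exI)
  show "Epoint (q + s *\<^sub>R d + t *\<^sub>R n) \<in> Epts e sp" by (rule Epoint_in_Epts)
  show "Ediff e sp OR (Epoint q) (Epoint (q + s *\<^sub>R d + t *\<^sub>R n)) (of_coords (s *\<^sub>R d + t *\<^sub>R n) 0)"
    using Ediff_Epoint[of q "s *\<^sub>R d + t *\<^sub>R n"] by (simp add: add.assoc)
  show "of_coords (s *\<^sub>R d + t *\<^sub>R n) 0 - s *\<^sub>R of_coords d 0 - t *\<^sub>R of_coords n 0 \<in> range e"
    using of_coords_combination[of s d 0 t n 0, symmetric] by simp
qed

lemma is_Eplane_orthogonal:
  assumes "d \<noteq> 0" "n \<noteq> 0" "d \<bullet> n = 0"
  shows "is_Eplane e sp OR (Eplane e sp OR (Epoint q) (of_coords d 0) (of_coords n 0))"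
proof -
  have "s = 0 \<and> t = 0" if "s *\<^sub>R of_coords d 0 + t *\<^sub>R of_coords n 0 \<in> range e" for s t
  proof -
    have st: "s *\<^sub>R d + t *\<^sub>R n = 0"
      using that of_coords_combination[of s d 0 t n 0] by (simp add: of_coords_in_range_e_iff)
    have "s * (d \<bullet> d) = d \<bullet> (s *\<^sub>R d + t *\<^sub>R n)"
      using assms(3) by (simp add: inner_add_right)
    then have "s = 0" using st assms(1) by simp
    moreover have "t = 0" using st assms(2) calculation by simp
    ultimately show ?thesis ..
  qed
  then show ?thesis unfolding is_Eplane_def using Epoint_in_Epts by blast
qed

lemma dec_of_coords:
  assumes w: "w \<noteq> 0"
  shows "dec e sp (of_coords w v) = (norm w, (w \<bullet> v) / norm w, of_coords (sgn w) (unit_moment w v))"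
  unfolding dec_def
proof (rule the_equality)
  have "dscale e (Dual (norm w) ((w \<bullet> v) / norm w)) (of_coords (sgn w) (unit_moment w v))
      = of_coords (norm w *\<^sub>R sgn w) (norm w *\<^sub>R unit_moment w v + ((w \<bullet> v) / norm w) *\<^sub>R sgn w)"
    by (simp add: dscale_of_coords)
  also have "((w \<bullet> v) / norm w) *\<^sub>R sgn w = screw_pitch w v *\<^sub>R w"
    using w by (simp add: sgn_div_norm screw_pitch_def power2_norm_eq_inner[symmetric] power2_eq_square
        field_simps)
  finally have "of_coords w v = dscale e (Dual (norm w) ((w \<bullet> v) / norm w)) (of_coords (sgn w) (unit_moment w v))"
    using w by (simp add: scaleR_norm_sgn scaleR_norm_unit_moment)
  moreover have "sp (of_coords (sgn w) (unit_moment w v)) (of_coords (sgn w) (unit_moment w v)) = 1"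
    using w inner_sgn_unit_moment[of w v]
    by (simp add: sp_of_coords one_dual_def inner_commute norm_sgn power2_norm_eq_inner[symmetric])
  ultimately show "case (norm w, (w \<bullet> v) / norm w, of_coords (sgn w) (unit_moment w v)) of (a, b, u) \<Rightarrow>
      0 < a \<and> of_coords w v = dscale e (Dual a b) u \<and> sp u u = 1"
    using w by simp
next
  fix y
  assume "case y of (a, b, u) \<Rightarrow> 0 < a \<and> of_coords w v = dscale e (Dual a b) u \<and> sp u u = 1"
  then obtain a b u where y: "y = (a, b, u)" and a: "a > 0"
    and z: "of_coords w v = dscale e (Dual a b) u" and uu: "sp u u = 1"
    by (cases y) auto
  obtain n m where u: "u = of_coords n m" by (rule obtain_coords)
  have wn: "w = a *\<^sub>R n" and vn: "v = a *\<^sub>R m + b *\<^sub>R n"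
    using z by (simp_all add: u dscale_of_coords of_coords_eq_iff)
  have n1: "n \<bullet> n = 1" and nm: "n \<bullet> m = 0"
    using uu by (simp_all add: u sp_of_coords one_dual_def inner_commute)
  have norm_w: "norm w = a" using wn a n1 by (simp add: norm_eq_sqrt_inner)
  have "sgn w = n" using norm_w a wn by (simp add: sgn_div_norm)
  moreover have "w \<bullet> v = a * b" using wn vn n1 nm by (simp add: inner_add_right algebra_simps)
  moreover have "screw_pitch w v *\<^sub>R w = b *\<^sub>R n"
    using wn \<open>w \<bullet> v = a * b\<close> a n1 by (simp add: screw_pitch_def power2_eq_square field_simps)
  then have "unit_moment w v = m" using norm_w a vn by (simp add: unit_moment_def)
  ultimately show "y = (norm w, (w \<bullet> v) / norm w, of_coords (sgn w) (unit_moment w v))"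
    using y norm_w a u by simp
qed

lemma pitch_of_coords: "w \<noteq> 0 \<Longrightarrow> pitch e sp (of_coords w v) = screw_pitch w v"
  by (simp add: pitch_def dec_of_coords screw_pitch_def power2_norm_eq_inner[symmetric] power2_eq_square)

lemma unitpart_of_coords: "w \<noteq> 0 \<Longrightarrow> unitpart e sp (of_coords w v) = of_coords (sgn w) (unit_moment w v)"
  by (simp add: unitpart_def dec_of_coords)

lemma screw_axis_of_coords:
  assumes "w \<noteq> 0"
  shows "screw_axis e sp (of_coords w v) = Epoint ` screw_line w v"
proof (intro set_eqI iffI)
  fix P assume "P \<in> screw_axis e sp (of_coords w v)"
  then have P: "P \<in> Epts e sp" "of_coords (sgn w) (unit_moment w v) \<in> P"
    using assms by (simp_all add: screw_axis_def unitpart_of_coords)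
  obtain p where "P = Epoint p" using Epts_obtain_Epoint[OF P(1)] .
  with P(2) assms show "P \<in> Epoint ` screw_line w v"
    by (simp add: of_coords_mem_Epoint_iff mem_screw_line_iff_unit_moment)
next
  fix P assume "P \<in> Epoint ` screw_line w v"
  then obtain p where "P = Epoint p" "p \<in> screw_line w v" by blast
  with assms show "P \<in> screw_axis e sp (of_coords w v)"
    by (simp add: screw_axis_def Epoint_in_Epts unitpart_of_coords of_coords_mem_Epoint_iff
        mem_screw_line_iff_unit_moment)
qed

lemma dependent_iff_same_axis_pitch:
  assumes "z1 \<notin> range e" "z2 \<notin> range e"
  shows "(\<exists>c1 c2::real. (c1 \<noteq> 0 \<or> c2 \<noteq> 0) \<and> c1 *\<^sub>R z1 + c2 *\<^sub>R z2 = 0)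
    \<longleftrightarrow> screw_axis e sp z1 = screw_axis e sp z2 \<and> pitch e sp z1 = pitch e sp z2"
proof -
  obtain w1 v1 where z1: "z1 = of_coords w1 v1" and w1: "w1 \<noteq> 0"
    using obtain_coords_not_in_range[OF assms(1)] .
  obtain w2 v2 where z2: "z2 = of_coords w2 v2" and w2: "w2 \<noteq> 0"
    using obtain_coords_not_in_range[OF assms(2)] .
  have "c1 *\<^sub>R z1 + c2 *\<^sub>R z2 = 0 \<longleftrightarrow> c1 *\<^sub>R w1 + c2 *\<^sub>R w2 = 0 \<and> c1 *\<^sub>R v1 + c2 *\<^sub>R v2 = 0" for c1 c2
    using of_coords_eq_iff[of _ _ 0 0] by (simp add: z1 z2 of_coords_combination)
  moreover have "screw_axis e sp z1 = screw_axis e sp z2 \<longleftrightarrow> screw_line w1 v1 = screw_line w2 v2"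
    using w1 w2 inj_image_eq_iff[of Epoint] Epoint_inject
    by (simp add: z1 z2 screw_axis_of_coords inj_on_def)
  ultimately show ?thesis
    using screws_dependent_iff[OF w1 w2] w1 w2 by (simp add: z1 z2 pitch_of_coords)
qed

lemma dependent_screws_obtain_common_normal:
  assumes z: "z1 \<notin> range e" "z2 \<notin> range e" "z3 \<notin> range e"
    and c: "c1 \<noteq> 0 \<or> c2 \<noteq> 0 \<or> c3 \<noteq> 0" and dep: "c1 *\<^sub>R z1 + c2 *\<^sub>R z2 + c3 *\<^sub>R z3 = 0"
  obtains q d where "d \<noteq> 0"
    "\<forall>z\<in>{z1, z2, z3}. \<exists>w v. z = of_coords w v \<and> w \<noteq> 0 \<and> normal_line q d w v"
proof -
  obtain w1 v1 where z1: "z1 = of_coords w1 v1" and w1: "w1 \<noteq> 0"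
    using obtain_coords_not_in_range[OF z(1)] .
  obtain w2 v2 where z2: "z2 = of_coords w2 v2" and w2: "w2 \<noteq> 0"
    using obtain_coords_not_in_range[OF z(2)] .
  obtain w3 v3 where z3: "z3 = of_coords w3 v3" and w3: "w3 \<noteq> 0"
    using obtain_coords_not_in_range[OF z(3)] .
  have "of_coords (c1 *\<^sub>R w1 + c2 *\<^sub>R w2 + c3 *\<^sub>R w3) (c1 *\<^sub>R v1 + c2 *\<^sub>R v2 + c3 *\<^sub>R v3) = of_coords 0 0"
    using dep by (simp add: z1 z2 z3 of_coords_add of_coords_scaleR)
  then have "c1 *\<^sub>R w1 + c2 *\<^sub>R w2 + c3 *\<^sub>R w3 = 0" "c1 *\<^sub>R v1 + c2 *\<^sub>R v2 + c3 *\<^sub>R v3 = 0"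
    by (simp_all only: of_coords_eq_iff)
  then obtain q d where "d \<noteq> 0" "normal_line q d w1 v1" "normal_line q d w2 v2" "normal_line q d w3 v3"
    using dependent_screws_common_normal_line[OF w1 w2 c] by blast
  then show ?thesis using that z1 z2 z3 w1 w2 w3 by blast
qed

lemma screw_axis_meets_normal_line:
  assumes w: "w \<noteq> 0" and d: "d \<noteq> 0" and normal: "normal_line q d w v"
  shows "screw_axis e sp (of_coords w v) \<inter> Eline e sp OR (Epoint q) (of_coords d 0) \<noteq> {}"
proof -
  obtain t where "q + t *\<^sub>R d \<in> screw_line w v"
    using normal_line_meets_screw_line[OF w d normal] .
  then have "Epoint (q + t *\<^sub>R d) \<in> screw_axis e sp (of_coords w v)"
    using w by (simp add: screw_axis_of_coords)
  then show ?thesis using Epoint_mem_Eline by blast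
qed

lemma re_sp_unitpart_normal_line:
  assumes "w \<noteq> 0" "normal_line q d w v"
  shows "re (sp (of_coords d 0) (unitpart e sp (of_coords w v))) = 0"
  using assms by (simp add: unitpart_of_coords sp_of_coords sgn_div_norm normal_line_def)

lemma screw_axis_subset_Eplane:
  assumes w: "w \<noteq> 0" and d: "d \<noteq> 0" and normal: "normal_line q d w v" and n: "sgn w = c *\<^sub>R n"
  shows "screw_axis e sp (of_coords w v) \<subseteq> Eplane e sp OR (Epoint q) (of_coords d 0) (of_coords n 0)"
proof
  fix P assume "P \<in> screw_axis e sp (of_coords w v)"
  then obtain p where P: "P = Epoint p" and p: "p \<in> screw_line w v"
    using w by (auto simp: screw_axis_of_coords)
  obtain t where "q + t *\<^sub>R d \<in> screw_line w v"
    using normal_line_meets_screw_line[OF w d normal] .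
  then obtain s where "p = q + t *\<^sub>R d + s *\<^sub>R w"
    using screw_line_diff_parallel[OF w _ p] by blast
  also have "s *\<^sub>R w = (s * norm w * c) *\<^sub>R n"
    using scaleR_norm_sgn[of w] n by (metis scaleR_scaleR)
  finally show "P \<in> Eplane e sp OR (Epoint q) (of_coords d 0) (of_coords n 0)"
    using P Epoint_mem_Eplane by simp
qed

lemma dependent_screws_axes_meet_common_normal:
  assumes "z1 \<notin> range e" "z2 \<notin> range e" "z3 \<notin> range e"
    and "c1 \<noteq> 0 \<or> c2 \<noteq> 0 \<or> c3 \<noteq> 0" and "c1 *\<^sub>R z1 + c2 *\<^sub>R z2 + c3 *\<^sub>R z3 = 0"
  shows "\<exists>A\<in>Epts e sp. \<exists>v. v \<notin> range e \<and>
    (\<forall>z\<in>{z1, z2, z3}. screw_axis e sp z \<inter> Eline e sp OR A v \<noteq> {} \<and> re (sp v (unitpart e sp z)) = 0)"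
proof -
  obtain q d where d: "d \<noteq> 0"
    and normal: "\<forall>z\<in>{z1, z2, z3}. \<exists>w v. z = of_coords w v \<and> w \<noteq> 0 \<and> normal_line q d w v"
    using dependent_screws_obtain_common_normal[OF assms] .
  have "of_coords d 0 \<notin> range e" using d by (simp add: of_coords_in_range_e_iff)
  moreover have "screw_axis e sp z \<inter> Eline e sp OR (Epoint q) (of_coords d 0) \<noteq> {}
      \<and> re (sp (of_coords d 0) (unitpart e sp z)) = 0" if z: "z \<in> {z1, z2, z3}" for z
  proof -
    obtain w v where "z = of_coords w v" "w \<noteq> 0" "normal_line q d w v" using normal z by blast
    then show ?thesis using screw_axis_meets_normal_line[OF _ d] re_sp_unitpart_normal_line by simp
  qed
  ultimately show ?thesis using Epoint_in_Epts by blast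
qed

lemma dependent_parallel_screws_axes_coplanar:
  assumes "z1 \<notin> range e" "z2 \<notin> range e" "z3 \<notin> range e"
    and "c1 \<noteq> 0 \<or> c2 \<noteq> 0 \<or> c3 \<noteq> 0" and "c1 *\<^sub>R z1 + c2 *\<^sub>R z2 + c3 *\<^sub>R z3 = 0"
    and parallel: "\<forall>z\<in>{z1, z2, z3}. \<forall>z'\<in>{z1, z2, z3}.
      \<exists>c::real. unitpart e sp z - c *\<^sub>R unitpart e sp z' \<in> range e"
  shows "\<exists>S. is_Eplane e sp OR S \<and> (\<forall>z\<in>{z1, z2, z3}. screw_axis e sp z \<subseteq> S)"
proof -
  obtain q d where d: "d \<noteq> 0"
    and normal: "\<forall>z\<in>{z1, z2, z3}. \<exists>w v. z = of_coords w v \<and> w \<noteq> 0 \<and> normal_line q d w v"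
    using dependent_screws_obtain_common_normal[OF assms(1-5)] .
  then obtain w1 v1 where z1: "z1 = of_coords w1 v1" "w1 \<noteq> 0" "normal_line q d w1 v1" by blast
  define n where "n = sgn w1"
  have n: "n \<noteq> 0" "d \<bullet> n = 0"
    using z1 by (simp_all add: n_def sgn_zero_iff sgn_div_norm normal_line_def)
  have "screw_axis e sp z \<subseteq> Eplane e sp OR (Epoint q) (of_coords d 0) (of_coords n 0)"
    if z: "z \<in> {z1, z2, z3}" for z
  proof -
    obtain w v where zw: "z = of_coords w v" "w \<noteq> 0" "normal_line q d w v" using normal z by blast
    obtain c where "unitpart e sp z - c *\<^sub>R unitpart e sp z1 \<in> range e" using parallel z by blast
    then have "sgn w = c *\<^sub>R n"
      using zw z1 by (simp add: n_def unitpart_of_coords of_coords_scaleR[symmetric]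
          of_coords_diff[symmetric] of_coords_in_range_e_iff)
    then show ?thesis using screw_axis_subset_Eplane[OF zw(2) d zw(3)] zw(1) by blast
  qed
  then show ?thesis using is_Eplane_orthogonal[OF d n] by blast
qed

end

theorem proposition16:
  fixes e :: "'m::real_vector \<Rightarrow> 'm" and sp :: "'m \<Rightarrow> 'm \<Rightarrow> dual" and OR :: "('m^3) set"
  assumes "dmodule3 e sp OR"
  shows "(\<forall>z1 z2. z1 \<notin> range e \<longrightarrow> z2 \<notin> range e \<longrightarrow>
            ((\<exists>c1 c2::real. (c1 \<noteq> 0 \<or> c2 \<noteq> 0) \<and> c1 *\<^sub>R z1 + c2 *\<^sub>R z2 = 0)
             \<longleftrightarrow> (screw_axis e sp z1 = screw_axis e sp z2 \<and> pitch e sp z1 = pitch e sp z2)))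
       \<and> (\<forall>z1 z2 z3. z1 \<notin> range e \<longrightarrow> z2 \<notin> range e \<longrightarrow> z3 \<notin> range e \<longrightarrow>
            (\<exists>c1 c2 c3::real. (c1 \<noteq> 0 \<or> c2 \<noteq> 0 \<or> c3 \<noteq> 0) \<and> c1 *\<^sub>R z1 + c2 *\<^sub>R z2 + c3 *\<^sub>R z3 = 0)
            \<longrightarrow> (\<exists>A\<in>Epts e sp. \<exists>v. v \<notin> range e \<and>
                   (\<forall>z\<in>{z1, z2, z3}. screw_axis e sp z \<inter> Eline e sp OR A v \<noteq> {}
                                     \<and> re (sp v (unitpart e sp z)) = 0))
              \<and> ((\<forall>z\<in>{z1, z2, z3}. \<forall>z'\<in>{z1, z2, z3}.
                     \<exists>c::real. unitpart e sp z - c *\<^sub>R unitpart e sp z' \<in> range e)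
                 \<longrightarrow> (\<exists>S. is_Eplane e sp OR S \<and> (\<forall>z\<in>{z1, z2, z3}. screw_axis e sp z \<subseteq> S))))"
proof -
  interpret dual_module e sp OR by (rule dual_module.intro) (rule assms)
  obtain f where "orthonormal f" "dbasis e f" "f \<in> OR"
    by (rule positive_orthonormal_frame_exists)
  then interpret oriented_frame e sp OR f by unfold_locales
  show ?thesis
  proof (intro conjI allI impI)
    show "(\<exists>c1 c2::real. (c1 \<noteq> 0 \<or> c2 \<noteq> 0) \<and> c1 *\<^sub>R z1 + c2 *\<^sub>R z2 = 0)
      \<longleftrightarrow> screw_axis e sp z1 = screw_axis e sp z2 \<and> pitch e sp z1 = pitch e sp z2"
      if "z1 \<notin> range e" "z2 \<notin> range e" for z1 z2
      using dependent_iff_same_axis_pitch[OF that] .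
  qed (elim exE conjE, blast intro: dependent_screws_axes_meet_common_normal
      dependent_parallel_screws_axes_coplanar)+
qed

end
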